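(* Let $\mathcal S\subset M_n$ be a matricial system. Then $\mathrm{Ind}_{\mathrm{CP}}(M_n:\mathcal S)^{-1}$ equals the optimal value of the semidefinite program $$\begin{aligned}&\text{minimize } \mathrm{tr}(X)\quad(X\in M_n \text{ hermitian},\ Y\in M_n\otimes\mathcal S^\perp\text{ hermitian})\\ &\text{subject to } (\mathrm{tr}\otimes\mathrm{tr})\big((I_n\otimes X+Y)\Delta_n\big)=1,\\ &\qquad I_n\otimes X+Y\in(M_n\otimes M_n)^+.\end{aligned}$$ This program is the semidefinite dual of the program maximizing $\lambda$ subject to $(\mathrm{tr}\otimes\mathrm{id})(X)=(1-\lambda)I_n$, $X+\lambda\Delta_n\in M_n\otimes\mathcal S$, $X\in(M_n\otimes M_n)^+$, and the two programs have the same optimal value.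
   Context: A matricial system is a self-adjoint subspace $\mathcal S\subset M_n$ containing $I_n$. $\mathcal S^\perp=\{A\in M_n:\mathrm{tr}(A^*B)=0\ \forall B\in\mathcal S\}$. $E_{ij}$ are matrix units, $\Delta_n=\sum_{i,j}E_{ij}\otimes E_{ij}$, $\mathrm{tr}$ is the unnormalized trace, and $M_n\otimes\mathcal S^\perp$, $M_n\otimes\mathcal S$ denote the corresponding subspaces of $M_n\otimes M_n$. For an operator system $\mathcal X$ with unit $1$, $\mathrm{CP}_1(\mathcal X)$ is the set of completely positive $\varphi:\mathcal X\to\mathcal X$ with $\varphi(\mathbb C1)\subset\mathbb C1$, and for a subsystem $\mathcal X_0$, $\mathrm{Ind}_{\mathrm{CP}}(\mathcal X:\mathcal X_0)=\inf\{\|\varphi(1)\|:\varphi\in\mathrm{CP}_1(\mathcal X),\ \varphi(\mathcal X)\subset\mathcal X_0,\ \varphi-\mathrm{id}_{\mathcal X}\text{ completely positive}\}$. *)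

theory Defs
  imports "HOL-Analysis.Analysis"
begin

text \<open>Matrices in M_n are complex^'n^'n (index type 'n of cardinality n);
  M_n \<otimes> M_n is realised as complex^('n::finite\<times>'n)^('n\<times>'n), where the row index (i,k)
  has first-factor index i and second-factor index k, i.e.
  (A \<otimes> B) at ((i,k),(j,l)) equals A i j * B k l.\<close>

definition adj :: "complex^'m^'m \<Rightarrow> complex^'m^'m" where
  "adj A = (\<chi> i j. cnj (A $ j $ i))"

definition hermitian :: "complex^'m^'m \<Rightarrow> bool" where
  "hermitian A \<longleftrightarrow> adj A = A"

definition smat :: "complex \<Rightarrow> complex^'m^'m \<Rightarrow> complex^'m^'m" where
  "smat c A = (\<chi> i j. c * A $ i $ j)"

definition mtr :: "complex^'m^'m \<Rightarrow> complex" where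
  "mtr A = (\<Sum>i\<in>UNIV. A $ i $ i)"

definition psd :: "complex^'m^'m \<Rightarrow> bool" where
  "psd Z \<longleftrightarrow> (\<forall>v::complex^'m.
      let q = (\<Sum>i\<in>UNIV. \<Sum>j\<in>UNIV. cnj (v $ i) * Z $ i $ j * v $ j)
      in Im q = 0 \<and> Re q \<ge> 0)"

definition clin :: "(complex^'n^'n \<Rightarrow> complex^'n^'n) \<Rightarrow> bool" where
  "clin \<phi> \<longleftrightarrow> (\<forall>A B. \<phi> (A + B) = \<phi> A + \<phi> B) \<and> (\<forall>c A. \<phi> (smat c A) = smat c (\<phi> A))"

text \<open>Positivity of the k\<times>k block matrix [A i j] (i,j<k) in M_k(M_n).\<close>
definition block_psd :: "nat \<Rightarrow> (nat \<Rightarrow> nat \<Rightarrow> complex^'n^'n) \<Rightarrow> bool" where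
  "block_psd k A \<longleftrightarrow> (\<forall>v::nat \<Rightarrow> complex^'n.
      let q = (\<Sum>i<k. \<Sum>j<k. \<Sum>a\<in>UNIV. \<Sum>b\<in>UNIV. cnj (v i $ a) * A i j $ a $ b * v j $ b)
      in Im q = 0 \<and> Re q \<ge> 0)"

definition CP :: "(complex^'n^'n \<Rightarrow> complex^'n^'n) \<Rightarrow> bool" where
  "CP \<phi> \<longleftrightarrow> clin \<phi> \<and> (\<forall>k A. block_psd k A \<longrightarrow> block_psd k (\<lambda>i j. \<phi> (A i j)))"

definition CP1 :: "(complex^'n^'n \<Rightarrow> complex^'n^'n) \<Rightarrow> bool" where
  "CP1 \<phi> \<longleftrightarrow> CP \<phi> \<and> (\<forall>c. \<exists>d. \<phi> (smat c (mat 1)) = smat d (mat 1))"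

definition csubspace :: "(complex^'m^'m) set \<Rightarrow> bool" where
  "csubspace V \<longleftrightarrow> 0 \<in> V \<and> (\<forall>A\<in>V. \<forall>B\<in>V. A + B \<in> V) \<and> (\<forall>c. \<forall>A\<in>V. smat c A \<in> V)"

definition matricial_system :: "(complex^'n^'n) set \<Rightarrow> bool" where
  "matricial_system S \<longleftrightarrow> csubspace S \<and> (\<forall>A\<in>S. adj A \<in> S) \<and> mat 1 \<in> S"

definition perp :: "(complex^'n^'n) set \<Rightarrow> (complex^'n^'n) set" where
  "perp S = {A. \<forall>B\<in>S. mtr (adj A ** B) = 0}"

text \<open>M_n \<otimes> V for a subspace V of M_n: matrices all of whose n\<times>n blocks
  (first tensor factor fixed) lie in V.\<close>
definition ampl :: "(complex^'n^'n) set \<Rightarrow> (complex^('n::finite\<times>'n)^('n\<times>'n)) set" where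
  "ampl V = {Z. \<forall>i j. (\<chi> k l. Z $ (i,k) $ (j,l)) \<in> V}"

text \<open>\<Delta>_n = \<Sum>_{i,j} E_ij \<otimes> E_ij.\<close>
definition Delta :: "complex^('n::finite\<times>'n)^('n\<times>'n)" where
  "Delta = (\<chi> p q. if fst p = snd p \<and> fst q = snd q then 1 else 0)"

definition idtensor :: "complex^'n^'n \<Rightarrow> complex^('n::finite\<times>'n)^('n\<times>'n)" where
  "idtensor X = (\<chi> p q. if fst p = fst q then X $ snd p $ snd q else 0)"

definition ptrace1 :: "complex^('n::finite\<times>'n)^('n\<times>'n) \<Rightarrow> complex^'n^'n" where
  "ptrace1 Z = (\<chi> k l. \<Sum>i\<in>UNIV. Z $ (i,k) $ (i,l))"

text \<open>Operator norm (w.r.t. the Euclidean norm on C^n).\<close>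
definition opnorm :: "complex^'n^'n \<Rightarrow> real" where
  "opnorm A = onorm (\<lambda>x. A *v x)"

definition Ind_CP :: "(complex^'n^'n) set \<Rightarrow> real" where
  "Ind_CP S = Inf {opnorm (\<phi> (mat 1)) | \<phi>.
      CP1 \<phi> \<and> range \<phi> \<subseteq> S \<and> CP (\<lambda>A. \<phi> A - A)}"

end

theory Submission
  imports Defs
begin

text \<open>A map \<open>\<phi>\<close> with \<open>\<phi>(1) = d 1\<close>, range in \<open>S\<close>, and \<open>\<phi>\<close>, \<open>\<phi> - id\<close> completely positive
  corresponds, through its Choi matrix \<open>C\<^sub>\<phi> = \<Sum> E\<^sub>i\<^sub>j \<otimes> \<phi>(E\<^sub>i\<^sub>j)\<close>, to the positive matrix
  \<open>X = (C\<^sub>\<phi> - \<Delta>)/d\<close>, which satisfies \<open>(tr \<otimes> id) X = (1 - 1/d) I\<close> and \<open>X + \<Delta>/d \<in> M\<^sub>n \<otimes> S\<close>;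
  conversely every such \<open>X\<close> with \<open>\<lambda> = 1/d > 0\<close> is \<open>(C\<^sub>\<phi> - \<Delta>)/d\<close> for such a map.
  Hence \<open>Ind\<^sub>C\<^sub>P(M\<^sub>n:S)\<^sup>-\<^sup>1\<close> is the supremum of the maximisation program.
  Weak duality is the positivity of the Hilbert--Schmidt pairing of the positive matrices
  \<open>X\<close> and \<open>I \<otimes> X' + Y\<close>, as \<open>M\<^sub>n \<otimes> S\<close> and \<open>M\<^sub>n \<otimes> S\<^sup>\<bottom>\<close> are orthogonal.
  For strong duality, if every dual value exceeds \<open>t\<close>, then \<open>0\<close> lies outside the convex set
  \<open>{(Z - L, tr(Z\<Delta>) - 1, tr Z - n t) | Z \<ge> 0, L = I \<otimes> X + Y, X, Y hermitian, Y \<in> M\<^sub>n \<otimes> S\<^sup>\<bottom>}\<close>.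
  A separating functional \<open>(B, \<beta>, \<gamma>)\<close> annihilates all such \<open>L\<close>, i.e. \<open>(tr \<otimes> id) B = 0\<close> and
  \<open>B \<in> M\<^sub>n \<otimes> S\<close>, and makes \<open>B + \<beta>\<Delta> + \<gamma> I\<close> positive. If \<open>\<gamma> > 0\<close>, a rescaling of this matrix is a
  primal point of value at least \<open>t\<close>; \<open>\<gamma> = 0\<close> would force the functional to vanish.\<close>

section \<open>Positive semidefinite matrices\<close>

definition quad_form :: "complex^'m^'m \<Rightarrow> complex^'m \<Rightarrow> complex" where
  "quad_form Z v = (\<Sum>i\<in>UNIV. \<Sum>j\<in>UNIV. cnj (v $ i) * Z $ i $ j * v $ j)"

definition rank_one :: "complex^'m \<Rightarrow> complex^'m^'m" where
  "rank_one w = (\<chi> p q. w $ p * cnj (w $ q))"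

lemma smat_nth: "smat c A $ i $ j = c * A $ i $ j"
  by (simp add: smat_def)

lemma smat_zero_left: "smat 0 A = 0"
  by (simp add: vec_eq_iff smat_nth)

lemma smat_one: "smat 1 A = A"
  by (simp add: vec_eq_iff smat_nth)

lemma smat_smat: "smat c (smat d A) = smat (c * d) A"
  by (simp add: vec_eq_iff smat_nth)

lemma scaleR_eq_smat: "c *\<^sub>R (A::complex^'m^'m) = smat (complex_of_real c) A"
  unfolding vec_eq_iff vector_scaleR_component smat_nth by (simp add: scaleR_conv_of_real)

lemma adj_nth: "adj A $ i $ j = cnj (A $ j $ i)"
  by (simp add: adj_def)

lemma adj_add: "adj (A + B) = adj A + adj B"
  by (simp add: vec_eq_iff adj_nth)

lemma adj_diff: "adj (A - B) = adj A - adj B"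
  by (simp add: vec_eq_iff adj_nth)

lemma adj_smat: "adj (smat c A) = smat (cnj c) (adj A)"
  by (simp add: vec_eq_iff adj_nth smat_nth)

lemma adj_zero: "adj 0 = 0"
  by (simp add: vec_eq_iff adj_nth)

lemma adj_adj: "adj (adj A) = A"
  by (simp add: vec_eq_iff adj_nth)

lemma hermitian_iff_cnj_nth: "hermitian Z \<longleftrightarrow> (\<forall>i j. cnj (Z $ i $ j) = Z $ j $ i)"
  unfolding hermitian_def vec_eq_iff adj_nth by (metis complex_cnj_cnj)

lemma hermitian_add: "hermitian A \<Longrightarrow> hermitian B \<Longrightarrow> hermitian (A + B)"
  by (simp add: hermitian_def adj_add)

lemma hermitian_diff: "hermitian A \<Longrightarrow> hermitian B \<Longrightarrow> hermitian (A - B)"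
  by (simp add: hermitian_def adj_diff)

lemma hermitian_smat: "hermitian A \<Longrightarrow> hermitian (smat (complex_of_real r) A)"
  by (simp add: hermitian_def adj_smat)

lemma hermitian_scaleR: "hermitian A \<Longrightarrow> hermitian (r *\<^sub>R A)"
  by (simp add: scaleR_eq_smat hermitian_smat)

lemma hermitian_zero: "hermitian 0"
  by (simp add: hermitian_def adj_zero)

lemma hermitian_mat1: "hermitian (mat 1)"
  by (auto simp: hermitian_def vec_eq_iff adj_nth mat_def)

lemma psd_iff_quad_form:
  "psd Z \<longleftrightarrow> (\<forall>v. Im (quad_form Z v) = 0 \<and> 0 \<le> Re (quad_form Z v))"
  unfolding psd_def quad_form_def Let_def by simp

lemma axis_nth_if: "axis i a $ j = (if j = i then a else 0)"
  by (simp add: axis_def)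

lemma quad_form_axis: "quad_form Z (axis i a) = cnj a * Z $ i $ i * a"
  unfolding quad_form_def axis_nth_if
  by (simp add: if_distrib[of "\<lambda>x. _ * x"] if_distrib[of cnj] if_distrib[of "\<lambda>x. x * _"] cong: if_cong)

lemma quad_form_axis_add_axis:
  assumes "i \<noteq> j"
  shows "quad_form Z (axis i a + axis j b) =
     cnj a * Z $ i $ i * a + cnj a * Z $ i $ j * b + cnj b * Z $ j $ i * a + cnj b * Z $ j $ j * b"
  using assms unfolding quad_form_def vector_add_component axis_nth_if
  by (simp add: distrib_left distrib_right sum.distrib if_distrib[of "\<lambda>x. _ * x"]
      if_distrib[of cnj] if_distrib[of "\<lambda>x. x * _"] cong: if_cong)

lemma sum_if_cond: "(\<Sum>j\<in>A. if P then f j else 0) = (if P then (\<Sum>j\<in>A. f j) else 0)"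
  by simp

lemma quad_form_add_axis:
  "quad_form C (v + axis r s) = quad_form C v + cnj s * (\<Sum>j\<in>UNIV. C $ r $ j * v $ j)
     + (\<Sum>i\<in>UNIV. cnj (v $ i) * C $ i $ r) * s + cnj s * C $ r $ r * s"
  unfolding quad_form_def vector_add_component axis_nth_if
  by (simp add: distrib_left distrib_right sum.distrib if_distrib[of "\<lambda>x. _ * x"] if_distrib[of cnj]
      if_distrib[of "\<lambda>x. x * _"] sum_distrib_left sum_if_cond mult_ac cong: if_cong)

lemma quad_form_add: "quad_form (A + B) v = quad_form A v + quad_form B v"
  unfolding quad_form_def by (simp add: algebra_simps sum.distrib)

lemma quad_form_diff: "quad_form (A - B) v = quad_form A v - quad_form B v"
  unfolding quad_form_def by (simp add: algebra_simps sum_subtractf)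

lemma quad_form_smat: "quad_form (smat c X) v = c * quad_form X v"
  unfolding quad_form_def smat_nth by (simp add: sum_distrib_left mult_ac)

lemma quad_form_mat1: "quad_form (mat 1) v = (\<Sum>i\<in>UNIV. cnj (v $ i) * v $ i)"
proof -
  have "quad_form (mat 1) v = (\<Sum>i\<in>UNIV. \<Sum>j\<in>UNIV. if j = i then cnj (v $ i) * v $ j else 0)"
    unfolding quad_form_def by (intro sum.cong refl) (auto simp: mat_def)
  then show ?thesis by simp
qed

lemma quad_form_rank_one:
  "quad_form (rank_one w) v = cnj (\<Sum>i\<in>UNIV. v $ i * cnj (w $ i)) * (\<Sum>i\<in>UNIV. v $ i * cnj (w $ i))"
  unfolding quad_form_def rank_one_def by (simp add: sum_distrib_left sum_distrib_right mult_ac)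

lemma Im_quad_form_hermitian:
  assumes "hermitian Z" shows "Im (quad_form Z v) = 0"
proof -
  have h: "\<And>i j. cnj (Z $ i $ j) = Z $ j $ i" using assms hermitian_iff_cnj_nth by blast
  have "cnj (quad_form Z v) = (\<Sum>i\<in>UNIV. \<Sum>j\<in>UNIV. v $ i * Z $ j $ i * cnj (v $ j))"
    unfolding quad_form_def by (simp add: h)
  also have "\<dots> = quad_form Z v" unfolding quad_form_def by (subst sum.swap) (simp add: mult_ac)
  finally show ?thesis by (metis Reals_cnj_iff complex_is_Real_iff)
qed

lemma psd_hermitian:
  assumes "psd Z" shows "hermitian Z"
proof -
  have q: "Im (quad_form Z v) = 0" for v using assms psd_iff_quad_form by blast
  have "cnj (Z $ i $ j) = Z $ j $ i" for i j
  proof (cases "i = j")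
    case True
    then show ?thesis using q[of "axis i 1"] by (simp add: quad_form_axis complex_eq_iff)
  next
    case False
    have d: "Im (Z $ i $ i) = 0" "Im (Z $ j $ j) = 0"
      using q[of "axis i 1"] q[of "axis j 1"] by (simp_all add: quad_form_axis)
    have "Im (Z $ i $ j + Z $ j $ i) = 0"
      using q[of "axis i 1 + axis j 1"] d quad_form_axis_add_axis[OF False, of Z 1 1] by simp
    moreover have "Re (Z $ i $ j) - Re (Z $ j $ i) = 0"
      using q[of "axis i 1 + axis j \<i>"] d quad_form_axis_add_axis[OF False, of Z 1 \<i>] by simp
    ultimately show ?thesis by (simp add: complex_eq_iff)
  qed
  then show ?thesis unfolding hermitian_iff_cnj_nth by blast
qed

lemma psd_zero: "psd 0"
  by (simp add: psd_iff_quad_form quad_form_def)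

lemma psd_add: "psd X \<Longrightarrow> psd Y \<Longrightarrow> psd (X + Y)"
  unfolding psd_iff_quad_form quad_form_add by simp

lemma psd_smat: "psd X \<Longrightarrow> 0 \<le> r \<Longrightarrow> psd (smat (complex_of_real r) X)"
  unfolding psd_iff_quad_form quad_form_smat by simp

lemma psd_scaleR: "psd Z \<Longrightarrow> 0 \<le> r \<Longrightarrow> psd (r *\<^sub>R Z)"
  by (simp add: scaleR_eq_smat psd_smat)

lemma psd_mat1: "psd (mat 1)"
  unfolding psd_iff_quad_form quad_form_mat1 Im_sum Re_sum by (simp add: sum_nonneg)

lemma cnj_mult_self: "cnj z * z = complex_of_real ((cmod z)\<^sup>2)"
  using complex_norm_square[of z] by (simp add: mult.commute)

lemma psd_rank_one: "psd (rank_one w)"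
  unfolding psd_iff_quad_form quad_form_rank_one cnj_mult_self by simp

lemma psd_diag:
  assumes "psd Z" shows "Im (Z $ i $ i) = 0" "0 \<le> Re (Z $ i $ i)"
  using assms[unfolded psd_iff_quad_form] quad_form_axis[of Z i 1]
  by (metis complex_cnj_one mult_1 mult_1_right)+

text \<open>Testing with \<open>a e\<^sub>i + e\<^sub>j\<close> for a suitable scalar \<open>a\<close> makes the form negative.\<close>
lemma psd_row_eq_0:
  assumes "psd Z" "Z $ i $ i = 0" shows "Z $ i $ j = 0"
proof (rule ccontr)
  assume nz: "Z $ i $ j \<noteq> 0"
  then have ij: "i \<noteq> j" using assms by auto
  define z where "z = Z $ i $ j"
  have h: "Z $ j $ i = cnj z" using psd_hermitian[OF assms(1)] hermitian_iff_cnj_nth z_def by metis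
  have n: "0 < (Re z)\<^sup>2 + (Im z)\<^sup>2" using nz z_def complex_neq_0 by blast
  define t where "t = (Re (Z $ j $ j) + 1) / (2 * ((Re z)\<^sup>2 + (Im z)\<^sup>2))"
  define a where "a = - (complex_of_real t) * z"
  have "0 \<le> Re (quad_form Z (axis i a + axis j 1))" using assms(1) psd_iff_quad_form by blast
  also have "quad_form Z (axis i a + axis j 1) = cnj a * z + cnj z * a + Z $ j $ j"
    using quad_form_axis_add_axis[OF ij, of Z a 1] assms(2) h z_def by simp
  also have "Re \<dots> = Re (Z $ j $ j) - 2 * t * ((Re z)\<^sup>2 + (Im z)\<^sup>2)"
    unfolding a_def by (simp add: power2_eq_square algebra_simps)
  also have "\<dots> = -1" unfolding t_def using n by (simp add: field_simps)
  finally show False by simp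
qed

lemma psd_col_eq_0:
  assumes "psd Z" "Z $ i $ i = 0" shows "Z $ j $ i = 0"
  using psd_row_eq_0[OF assms, of j] psd_hermitian[OF assms(1)] hermitian_iff_cnj_nth
  by (metis complex_cnj_zero)

lemma psd_eq_0_if_trace_0:
  assumes "psd B" "Re (mtr B) = 0" shows "B = 0"
proof -
  have nn: "\<And>i. 0 \<le> Re (B $ i $ i)" using psd_diag[OF assms(1)] by blast
  have "(\<Sum>i\<in>UNIV. Re (B $ i $ i)) = 0" using assms(2) by (simp add: mtr_def Re_sum)
  then have "\<forall>i\<in>UNIV. Re (B $ i $ i) = 0" using nn sum_nonneg_eq_0_iff[of UNIV "\<lambda>i. Re (B $ i $ i)"] by simp
  then have d: "B $ i $ i = 0" for i using psd_diag[OF assms(1), of i] by (simp add: complex_eq_iff)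
  show ?thesis using psd_row_eq_0[OF assms(1) d] by (simp add: vec_eq_iff)
qed

lemma rank_one_nth: "rank_one w $ p $ q = w $ p * cnj (w $ q)"
  by (simp add: rank_one_def)

lemma rank_one_zero: "rank_one 0 = 0"
  by (simp add: rank_one_def vec_eq_iff)

text \<open>The Schur complement of a nonzero diagonal entry: its quadratic form at \<open>v\<close> is that of \<open>C\<close> at
  \<open>v - (C\<^sub>r v / C\<^sub>r\<^sub>r) e\<^sub>r\<close>.\<close>
lemma psd_schur_complement:
  fixes C :: "complex^'m^'m"
  assumes psdC: "psd C" and nz: "C $ r $ r \<noteq> 0"
  shows "psd (C - (\<chi> p q. C $ p $ r * C $ r $ q / C $ r $ r))" (is "psd (C - ?R)")
  unfolding psd_iff_quad_form
proof
  fix v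
  have herm: "\<And>i j. cnj (C $ i $ j) = C $ j $ i"
    using psd_hermitian[OF psdC] hermitian_iff_cnj_nth by blast
  define a where "a = (\<Sum>j\<in>UNIV. C $ r $ j * v $ j)"
  have a': "(\<Sum>i\<in>UNIV. cnj (v $ i) * C $ i $ r) = cnj a"
    unfolding a_def by (simp add: herm mult.commute)
  have "quad_form ?R v
      = (\<Sum>i\<in>UNIV. \<Sum>j\<in>UNIV. (cnj (v $ i) * C $ i $ r) * (C $ r $ j * v $ j) / C $ r $ r)"
    unfolding quad_form_def by (simp add: mult_ac)
  also have "\<dots> = (\<Sum>i\<in>UNIV. cnj (v $ i) * C $ i $ r) * (\<Sum>j\<in>UNIV. C $ r $ j * v $ j) / C $ r $ r"
    by (simp add: sum_product sum_divide_distrib)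
  finally have qR: "quad_form ?R v = cnj a * a / C $ r $ r" using a' a_def by simp
  define s where "s = - a / C $ r $ r"
  have "quad_form C (v + axis r s) = quad_form C v + cnj s * a + cnj a * s + cnj s * C $ r $ r * s"
    using quad_form_add_axis[of C v r s] a' a_def by simp
  also have "\<dots> = quad_form C v - cnj a * a / C $ r $ r"
    unfolding s_def using nz herm[of r r] by (simp add: field_simps)
  finally have "quad_form (C - ?R) v = quad_form C (v + axis r s)"
    unfolding quad_form_diff qR by simp
  then show "Im (quad_form (C - ?R) v) = 0 \<and> 0 \<le> Re (quad_form (C - ?R) v)"
    using psdC psd_iff_quad_form by metis
qed

text \<open>One step of a Cholesky factorisation: \<open>w\<close> is the \<open>r\<close>-th column scaled by \<open>1/\<surd>C\<^sub>r\<^sub>r\<close>.\<close>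
lemma psd_peel_rank_one:
  fixes C :: "complex^'m^'m"
  assumes psdC: "psd C"
  obtains w where "psd (C - rank_one w)" "\<And>j. (C - rank_one w) $ r $ j = 0"
    "\<And>i. (C - rank_one w) $ i $ r = 0" "\<And>p. C $ p $ r = 0 \<Longrightarrow> w $ p = 0"
proof (cases "C $ r $ r = 0")
  case True
  show ?thesis
    by (rule that[of 0]) (simp_all add: rank_one_zero psdC psd_row_eq_0[OF psdC True] psd_col_eq_0[OF psdC True])
next
  case False
  define c where "c = Re (C $ r $ r)"
  have cr: "C $ r $ r = complex_of_real c"
    using psd_diag[OF psdC, of r] c_def by (simp add: complex_eq_iff)
  have "c \<noteq> 0" using False cr by auto
  then have cpos: "0 < c" using psd_diag[OF psdC, of r] c_def by linarith
  define w where "w = (\<chi> p. C $ p $ r / complex_of_real (sqrt c))"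
  have "rank_one w = (\<chi> p q. C $ p $ r * C $ r $ q / C $ r $ r)"
  proof -
    have "complex_of_real (sqrt c) * complex_of_real (sqrt c) = complex_of_real c"
      unfolding of_real_mult[symmetric] using cpos by simp
    moreover have "cnj (C $ q $ r) = C $ r $ q" for q
      using psd_hermitian[OF psdC] hermitian_iff_cnj_nth by blast
    ultimately show ?thesis using cr by (simp add: vec_eq_iff rank_one_nth w_def)
  qed
  then show ?thesis
    using that[of w] psd_schur_complement[OF psdC False] False by (simp add: w_def)
qed

lemma psd_sum_rank_one_on:
  fixes C :: "complex^'m^'m"
  assumes "finite K" "psd C" "\<And>i j. i \<notin> K \<or> j \<notin> K \<Longrightarrow> C $ i $ j = 0"
  shows "\<exists>w. C = (\<Sum>r\<in>K. rank_one (w r))"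
  using assms
proof (induction K arbitrary: C rule: finite_induct)
  case empty
  then show ?case by (simp add: vec_eq_iff)
next
  case (insert r K)
  obtain w0 where psd': "psd (C - rank_one w0)" and row: "\<And>j. (C - rank_one w0) $ r $ j = 0"
    and col: "\<And>i. (C - rank_one w0) $ i $ r = 0" and w0: "\<And>p. C $ p $ r = 0 \<Longrightarrow> w0 $ p = 0"
    using psd_peel_rank_one[OF insert.prems(1)] by metis
  have "(C - rank_one w0) $ i $ j = 0" if "i \<notin> K \<or> j \<notin> K" for i j
  proof (cases "i = r \<or> j = r")
    case True
    then show ?thesis using row col by blast
  next
    case False
    then have "C $ i $ j = 0" "C $ i $ r = 0 \<or> C $ j $ r = 0"
      using that insert.prems(2) by auto
    then show ?thesis using w0 by (auto simp: rank_one_nth)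
  qed
  then obtain w where w: "C - rank_one w0 = (\<Sum>x\<in>K. rank_one (w x))"
    using insert.IH[OF psd'] by blast
  have "(\<Sum>x\<in>insert r K. rank_one ((w(r := w0)) x)) = rank_one w0 + (\<Sum>x\<in>K. rank_one ((w(r := w0)) x))"
    using insert.hyps by simp
  also have "(\<Sum>x\<in>K. rank_one ((w(r := w0)) x)) = C - rank_one w0"
    unfolding w using insert.hyps(2) by (intro sum.cong) auto
  finally have "C = (\<Sum>x\<in>insert r K. rank_one ((w(r := w0)) x))" by simp
  then show ?case by blast
qed

lemma psd_sum_rank_one:
  fixes C :: "complex^'m^'m"
  assumes "psd C" shows "\<exists>w::'m \<Rightarrow> complex^'m. C = (\<Sum>r\<in>UNIV. rank_one (w r))"
  using psd_sum_rank_one_on[of UNIV C] assms by simp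

section \<open>The Hilbert--Schmidt pairing and orthogonal complements\<close>

definition hs_inner :: "complex^'m^'m \<Rightarrow> complex^'m^'m \<Rightarrow> complex" where
  "hs_inner A B = (\<Sum>i\<in>UNIV. \<Sum>j\<in>UNIV. cnj (A $ i $ j) * B $ i $ j)"

lemma inner_eq_Re_hs_inner: "inner (A::complex^'m^'m) B = Re (hs_inner A B)"
  unfolding hs_inner_def inner_vec_def inner_complex_def Re_sum by simp

lemma mtr_adj_mult: "mtr (adj A ** B) = hs_inner A B"
proof -
  have "mtr (adj A ** B) = (\<Sum>i\<in>UNIV. \<Sum>k\<in>UNIV. cnj (A $ k $ i) * B $ k $ i)"
    by (simp add: mtr_def matrix_matrix_mult_def adj_def)
  also have "\<dots> = hs_inner A B" unfolding hs_inner_def by (rule sum.swap)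
  finally show ?thesis .
qed

lemma hs_inner_commute: "hs_inner B A = cnj (hs_inner A B)"
  unfolding hs_inner_def by (simp add: mult.commute)

lemma hs_inner_zero_left: "hs_inner 0 B = 0"
  by (simp add: hs_inner_def)

lemma hs_inner_add_left: "hs_inner (A + B) C = hs_inner A C + hs_inner B C"
  unfolding hs_inner_def by (simp add: distrib_right sum.distrib)

lemma hs_inner_add_right: "hs_inner A (B + C) = hs_inner A B + hs_inner A C"
  unfolding hs_inner_def by (simp add: distrib_left sum.distrib)

lemma hs_inner_smat_left: "hs_inner (smat c A) B = cnj c * hs_inner A B"
  unfolding hs_inner_def smat_nth by (simp add: sum_distrib_left mult_ac)

lemma hs_inner_smat_right: "hs_inner A (smat c B) = c * hs_inner A B"
  unfolding hs_inner_def smat_nth by (simp add: sum_distrib_left mult_ac)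

lemma hs_inner_sum_right:
  "finite K \<Longrightarrow> hs_inner A (\<Sum>r\<in>K. B r) = (\<Sum>r\<in>K. hs_inner A (B r))"
  by (induction K rule: finite_induct) (auto simp: hs_inner_def distrib_left sum.distrib)

lemma hs_inner_if_right: "hs_inner D (if P then C else 0) = (if P then hs_inner D C else 0)"
  by (simp add: hs_inner_def)

lemma hs_inner_adj_left: "hs_inner (adj A) B = cnj (hs_inner A (adj B))"
proof -
  have "hs_inner (adj A) B = (\<Sum>i\<in>UNIV. \<Sum>j\<in>UNIV. A $ j $ i * B $ i $ j)"
    by (simp add: hs_inner_def adj_def)
  also have "\<dots> = (\<Sum>j\<in>UNIV. \<Sum>i\<in>UNIV. A $ j $ i * B $ i $ j)" by (rule sum.swap)
  also have "\<dots> = cnj (hs_inner A (adj B))" by (simp add: hs_inner_def adj_def mult.commute)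
  finally show ?thesis .
qed

lemma hs_inner_adj_adj: "hs_inner (adj D) (adj C) = cnj (hs_inner D C)"
  unfolding hs_inner_def adj_nth by (subst sum.swap) (simp add: mult.commute)

lemma hs_inner_mat1_left: "hs_inner (mat 1) Z = mtr Z"
proof -
  have "hs_inner (mat 1) Z = (\<Sum>i\<in>UNIV. \<Sum>j\<in>UNIV. if i = j then Z $ i $ j else 0)"
    unfolding hs_inner_def by (intro sum.cong refl) (auto simp: mat_def)
  also have "\<dots> = mtr Z" by (simp add: mtr_def)
  finally show ?thesis .
qed

lemma hs_inner_rank_one: "hs_inner P (rank_one w) = cnj (quad_form P w)"
  unfolding hs_inner_def quad_form_def rank_one_def by (simp add: mult_ac)

lemma inner_smat_real_left: "inner (smat (complex_of_real r) A) B = r * inner A B"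
  by (simp add: scaleR_eq_smat[symmetric])

lemma inner_mat1: "inner (mat 1) Z = Re (mtr Z)"
  by (simp add: inner_eq_Re_hs_inner hs_inner_mat1_left)

lemma inner_rank_one: "inner M (rank_one v) = Re (quad_form M v)"
  unfolding inner_eq_Re_hs_inner hs_inner_rank_one by simp

lemma inner_psd_nonneg:
  fixes P Q :: "complex^'m^'m"
  assumes "psd P" "psd Q" shows "0 \<le> inner P Q"
proof -
  obtain w :: "'m \<Rightarrow> complex^'m" where w: "Q = (\<Sum>r\<in>UNIV. rank_one (w r))"
    using psd_sum_rank_one[OF assms(2)] by blast
  have "inner P Q = (\<Sum>r\<in>UNIV. Re (quad_form P (w r)))"
    unfolding inner_eq_Re_hs_inner w hs_inner_sum_right[OF finite_class.finite_UNIV] hs_inner_rank_one Re_sum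
    by simp
  also have "\<dots> \<ge> 0" using assms(1) psd_iff_quad_form by (meson sum_nonneg)
  finally show ?thesis .
qed

lemma csubspace_sum:
  assumes "csubspace V" "finite K" "\<And>x. x \<in> K \<Longrightarrow> X x \<in> V"
  shows "(\<Sum>x\<in>K. X x) \<in> V"
  using assms(2,3) assms(1) unfolding csubspace_def by (induction K rule: finite_induct) auto

lemma subspace_if_csubspace: "csubspace S \<Longrightarrow> subspace S"
  unfolding subspace_def csubspace_def scaleR_eq_smat by blast

lemma perp_iff_hs_inner: "A \<in> perp S \<longleftrightarrow> (\<forall>B\<in>S. hs_inner A B = 0)"
  unfolding perp_def mtr_adj_mult by simp

text \<open>The real inner product only sees \<open>Re tr(A\<^sup>*B)\<close>; complex homogeneity of \<open>S\<close> (test with \<open>i B\<close>)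
  recovers the imaginary part.\<close>
lemma perp_eq_orthogonal_comp:
  assumes "csubspace S" shows "perp S = orthogonal_comp S"
proof -
  have "A \<in> perp S \<longleftrightarrow> (\<forall>B\<in>S. inner B A = 0)" for A
  proof
    assume "A \<in> perp S"
    then show "\<forall>B\<in>S. inner B A = 0"
      unfolding perp_iff_hs_inner inner_eq_Re_hs_inner by (simp add: hs_inner_commute[of _ A])
  next
    assume h: "\<forall>B\<in>S. inner B A = 0"
    have "hs_inner A B = 0" if "B \<in> S" for B
    proof -
      have "smat \<i> B \<in> S" using assms that unfolding csubspace_def by blast
      then have "Re (hs_inner A (smat \<i> B)) = 0"
        using h unfolding inner_eq_Re_hs_inner hs_inner_commute[of _ A] by simp
      then have "Im (hs_inner A B) = 0" unfolding hs_inner_smat_right by simp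
      moreover have "Re (hs_inner A B) = 0"
        using h that unfolding inner_eq_Re_hs_inner hs_inner_commute[of _ A] by simp
      ultimately show ?thesis by (simp add: complex_eq_iff)
    qed
    then show "A \<in> perp S" unfolding perp_iff_hs_inner by blast
  qed
  then show ?thesis unfolding orthogonal_comp_def orthogonal_def by blast
qed

lemma orthogonal_comp_perp: "csubspace S \<Longrightarrow> orthogonal_comp (perp S) = S"
  using perp_eq_orthogonal_comp orthogonal_comp_self subspace_if_csubspace by metis

lemma csubspace_perp: "csubspace (perp S)"
  unfolding csubspace_def
  by (simp add: perp_iff_hs_inner hs_inner_zero_left hs_inner_add_left hs_inner_smat_left)

lemma adj_mem_perp: "matricial_system S \<Longrightarrow> A \<in> perp S \<Longrightarrow> adj A \<in> perp S"
  unfolding perp_iff_hs_inner matricial_system_def by (simp add: hs_inner_adj_left)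

lemma mtr_perp: "matricial_system S \<Longrightarrow> Y \<in> perp S \<Longrightarrow> mtr Y = 0"
  unfolding perp_iff_hs_inner matricial_system_def
  using hs_inner_commute[of "mat 1" Y] hs_inner_mat1_left[of Y] by force

section \<open>Block matrices in \<open>M\<^sub>n \<otimes> M\<^sub>n\<close>\<close>

lemma sum_rotate3:
  "(\<Sum>i\<in>A. \<Sum>j\<in>B. \<Sum>r\<in>C. g i j r) = (\<Sum>r\<in>C. \<Sum>i\<in>A. \<Sum>j\<in>B. g i j r)"
proof -
  have "(\<Sum>i\<in>A. \<Sum>j\<in>B. \<Sum>r\<in>C. g i j r) = (\<Sum>i\<in>A. \<Sum>r\<in>C. \<Sum>j\<in>B. g i j r)"
    by (intro sum.cong refl sum.swap)
  also have "\<dots> = (\<Sum>r\<in>C. \<Sum>i\<in>A. \<Sum>j\<in>B. g i j r)" by (rule sum.swap)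
  finally show ?thesis .
qed

lemma sum_UNIV_prod:
  "(\<Sum>p\<in>(UNIV::('a::finite \<times> 'b::finite) set). f p) = (\<Sum>a\<in>UNIV. \<Sum>b\<in>UNIV. f (a,b))"
proof -
  have "(\<Sum>a\<in>UNIV. \<Sum>b\<in>UNIV. f (a,b)) = (\<Sum>(a,b)\<in>(UNIV::'a set)\<times>(UNIV::'b set). f (a,b))"
    by (rule sum.cartesian_product)
  then show ?thesis by simp
qed

lemma sum_sum_if_eq:
  "(\<Sum>a\<in>(UNIV::'a::finite set). \<Sum>b\<in>(UNIV::'b::finite set). if a = i \<and> b = j then f a b else 0) = f i j"
proof -
  have e: "\<And>a b. (if a = i \<and> b = j then f a b else 0) = (if a = i then (if b = j then f a b else 0) else 0)" by auto
  show ?thesis unfolding e by (simp add: sum_if_cond)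
qed

lemma sum_sum_if_eq_outer:
  "(\<Sum>j\<in>(UNIV::'a::finite set). \<Sum>l\<in>UNIV. if i = j then F j l else 0) = (\<Sum>l\<in>UNIV. F i l)"
  by (simp add: sum_if_cond)

lemma sum4_if_diag:
  "(\<Sum>i\<in>(UNIV::'a::finite set). \<Sum>k\<in>UNIV. \<Sum>j\<in>(UNIV::'b::finite set). \<Sum>l\<in>UNIV.
      if j = l \<and> i = k then G i k j l else 0)
   = (\<Sum>i\<in>UNIV. \<Sum>j\<in>UNIV. G i i j j)"
proof -
  have e: "\<And>i k j l. (if j = l \<and> i = k then G i k j l else 0) = (if k = i then (if l = j then G i k j l else 0) else 0)"
    by auto
  show ?thesis unfolding e by (simp add: sum_if_cond)
qed

lemma mult_if_one_zero: "c * (if P then 1 else 0) = (if P then c else (0::complex))"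
  by simp

definition block ::
    "complex^('n::finite\<times>'n)^('n\<times>'n) \<Rightarrow> 'n \<Rightarrow> 'n \<Rightarrow> complex^'n^'n" where
  "block Z i j = (\<chi> k l. Z $ (i,k) $ (j,l))"

lemma block_nth: "block Z i j $ k $ l = Z $ (i,k) $ (j,l)" by (simp add: block_def)

definition of_blocks ::
    "('n::finite \<Rightarrow> 'n \<Rightarrow> complex^'n^'n) \<Rightarrow> complex^('n\<times>'n)^('n\<times>'n)" where
  "of_blocks F = (\<chi> p q. F (fst p) (fst q) $ snd p $ snd q)"

lemma block_of_blocks: "block (of_blocks F) a b = F a b" by (simp add: vec_eq_iff block_nth of_blocks_def)

lemma block_add: "block (A + B) i j = block A i j + block B i j" by (simp add: vec_eq_iff block_nth)

lemma block_smat: "block (smat c A) i j = smat c (block A i j)" by (simp add: vec_eq_iff block_nth smat_nth)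

lemma block_mat1: "block (mat 1) i j = (if i = j then mat 1 else 0)" by (simp add: vec_eq_iff block_nth mat_def)

lemma block_hermitian:
  assumes "hermitian B"
  shows "block B j i = adj (block B i j)"
  using assms unfolding hermitian_iff_cnj_nth by (simp add: vec_eq_iff block_nth adj_nth)

lemma hermitian_of_blocks:
  fixes F :: "'n::finite \<Rightarrow> 'n \<Rightarrow> complex^'n^'n"
  assumes "\<And>a b. F b a = adj (F a b)" shows "hermitian (of_blocks F)"
  unfolding hermitian_iff_cnj_nth
proof (intro allI)
  fix p q :: "'n \<times> 'n"
  have "F (fst q) (fst p) $ snd q $ snd p = adj (F (fst p) (fst q)) $ snd q $ snd p" using assms[of "fst p" "fst q"] by (simp add: adj_adj)
  then show "cnj (of_blocks F $ p $ q) = of_blocks F $ q $ p" unfolding of_blocks_def adj_nth by simp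
qed

lemma ampl_iff_block: "Z \<in> ampl V \<longleftrightarrow> (\<forall>i j. block Z i j \<in> V)"
  by (simp add: ampl_def block_def)

lemma ampl_add:
  "csubspace V \<Longrightarrow> A \<in> ampl V \<Longrightarrow> B \<in> ampl V \<Longrightarrow> A + B \<in> ampl V"
  unfolding ampl_iff_block block_add csubspace_def by blast

lemma ampl_smat: "csubspace V \<Longrightarrow> A \<in> ampl V \<Longrightarrow> smat c A \<in> ampl V"
  unfolding ampl_iff_block block_smat csubspace_def by blast

lemma ampl_mat1: "matricial_system S \<Longrightarrow> mat 1 \<in> ampl S"
  unfolding ampl_iff_block block_mat1 matricial_system_def csubspace_def by simp

lemma ampl_zero: "csubspace V \<Longrightarrow> 0 \<in> ampl V"
  unfolding ampl_iff_block csubspace_def by (simp add: block_def vec_eq_iff zero_vec_def)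

lemma hs_inner_blocks: "hs_inner W Y = (\<Sum>i\<in>UNIV. \<Sum>j\<in>UNIV. hs_inner (block W i j) (block Y i j))"
proof -
  have "hs_inner W Y = (\<Sum>i\<in>UNIV. \<Sum>k\<in>UNIV. \<Sum>j\<in>UNIV. \<Sum>l\<in>UNIV. cnj (W $ (i,k) $ (j,l)) * Y $ (i,k) $ (j,l))"
    unfolding hs_inner_def sum_UNIV_prod by simp
  also have "\<dots> = (\<Sum>i\<in>UNIV. \<Sum>j\<in>UNIV. \<Sum>k\<in>UNIV. \<Sum>l\<in>UNIV. cnj (W $ (i,k) $ (j,l)) * Y $ (i,k) $ (j,l))"
    by (intro sum.cong refl sum.swap)
  also have "\<dots> = (\<Sum>i\<in>UNIV. \<Sum>j\<in>UNIV. hs_inner (block W i j) (block Y i j))"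
    unfolding hs_inner_def block_nth by simp
  finally show ?thesis .
qed

lemma inner_ampl_ampl_perp:
  assumes "csubspace S" "W \<in> ampl S" "Y \<in> ampl (perp S)"
  shows "inner W Y = 0"
proof -
  have "hs_inner (block W i j) (block Y i j) = 0" for i j
  proof -
    have "hs_inner (block Y i j) (block W i j) = 0" using assms unfolding ampl_iff_block perp_iff_hs_inner by blast
    then show ?thesis unfolding hs_inner_commute[of "block Y i j" "block W i j"] by simp
  qed
  then show ?thesis unfolding inner_eq_Re_hs_inner hs_inner_blocks by simp
qed

lemma mtr_add: "mtr (A + B) = mtr A + mtr B" by (simp add: mtr_def sum.distrib)

lemma mtr_zero: "mtr 0 = 0" by (simp add: mtr_def)

lemma mtr_scaleR: "mtr (r *\<^sub>R A) = complex_of_real r * mtr A"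
  by (simp only: mtr_def vector_scaleR_component) (simp add: scaleR_conv_of_real sum_distrib_left)

lemma mtr_eq_sum_blocks: "mtr Y = (\<Sum>i\<in>UNIV. mtr (block Y i i))"
  unfolding mtr_def sum_UNIV_prod block_nth ..

lemma mtr_ampl_perp:
  assumes "matricial_system S" "Y \<in> ampl (perp S)"
  shows "mtr Y = 0"
  unfolding mtr_eq_sum_blocks using mtr_perp[OF assms(1)] assms(2) unfolding ampl_iff_block by simp

lemma idtensor_nth: "idtensor X $ p $ q = (if fst p = fst q then X $ snd p $ snd q else 0)"
  by (simp add: idtensor_def)

lemma idtensor_mat1: "idtensor (mat 1) = mat 1"
  by (auto simp: vec_eq_iff idtensor_nth mat_def prod_eq_iff)

lemma idtensor_smat: "idtensor (smat c X) = smat c (idtensor X)"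
  by (simp add: vec_eq_iff idtensor_nth smat_nth)

lemma idtensor_zero: "idtensor 0 = 0"
  by (simp add: vec_eq_iff idtensor_nth)

lemma idtensor_scaleR: "idtensor (r *\<^sub>R X) = r *\<^sub>R idtensor X"
  by (simp add: scaleR_eq_smat idtensor_smat)

lemma hermitian_idtensor: "hermitian X \<Longrightarrow> hermitian (idtensor X)"
  unfolding hermitian_iff_cnj_nth by (simp add: idtensor_nth)

lemma mtr_idtensor: "mtr (idtensor (X::complex^'n^'n)) = of_nat CARD('n) * mtr X"
proof -
  have "mtr (idtensor X) = (\<Sum>i\<in>(UNIV::'n set). \<Sum>k\<in>UNIV. X $ k $ k)"
    unfolding mtr_def sum_UNIV_prod by (simp add: idtensor_nth)
  also have "\<dots> = of_nat CARD('n) * mtr X" by (simp add: mtr_def)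
  finally show ?thesis .
qed

lemma hs_inner_idtensor: "hs_inner X (idtensor X') = hs_inner (ptrace1 X) X'"
proof -
  have "hs_inner X (idtensor X') = (\<Sum>i\<in>UNIV. \<Sum>k\<in>UNIV. \<Sum>j\<in>UNIV. \<Sum>l\<in>UNIV. if i = j then cnj (X $ (i,k) $ (j,l)) * X' $ k $ l else 0)"
    unfolding hs_inner_def sum_UNIV_prod idtensor_nth by (intro sum.cong refl) auto
  also have "\<dots> = (\<Sum>i\<in>UNIV. \<Sum>k\<in>UNIV. \<Sum>l\<in>UNIV. cnj (X $ (i,k) $ (i,l)) * X' $ k $ l)"
    unfolding sum_sum_if_eq_outer ..
  also have "\<dots> = (\<Sum>k\<in>UNIV. \<Sum>l\<in>UNIV. \<Sum>i\<in>UNIV. cnj (X $ (i,k) $ (i,l)) * X' $ k $ l)"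
    by (rule sum_rotate3[symmetric])
  also have "\<dots> = hs_inner (ptrace1 X) X'"
    unfolding hs_inner_def ptrace1_def by (simp add: sum_distrib_right)
  finally show ?thesis .
qed

lemma ptrace1_add: "ptrace1 (A + B) = ptrace1 A + ptrace1 B"
  by (simp add: vec_eq_iff ptrace1_def sum.distrib)

lemma ptrace1_diff: "ptrace1 (A - B) = ptrace1 A - ptrace1 B"
  by (simp add: vec_eq_iff ptrace1_def sum_subtractf)

lemma ptrace1_smat: "ptrace1 (smat c A) = smat c (ptrace1 A)"
  by (simp add: vec_eq_iff ptrace1_def smat_nth sum_distrib_left)

lemma ptrace1_mat1: "ptrace1 (mat 1 :: complex^('n::finite\<times>'n)^('n\<times>'n)) = smat (of_nat CARD('n)) (mat 1)"
  by (simp add: vec_eq_iff ptrace1_def mat_def smat_nth)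

lemma ptrace1_Delta: "ptrace1 Delta = mat 1"
proof -
  have "(\<Sum>i\<in>UNIV. Delta $ (i,k) $ (i,l)) = mat 1 $ k $ l" for k l
  proof -
    have "(\<Sum>i\<in>UNIV. Delta $ (i,k) $ (i,l)) = (\<Sum>i\<in>UNIV. if i = k then (if k = l then 1 else 0) else 0)"
      by (intro sum.cong refl) (auto simp: Delta_def mult_if_one_zero)
    also have "\<dots> = mat 1 $ k $ l" by (simp add: mat_def)
    finally show ?thesis .
  qed
  then show ?thesis unfolding vec_eq_iff ptrace1_def vec_lambda_beta by blast
qed

lemma hermitian_ptrace1:
  assumes "hermitian B"
  shows "hermitian (ptrace1 B)"
  using assms unfolding hermitian_iff_cnj_nth by (simp add: ptrace1_def)

definition delta_pair :: "complex^('n::finite\<times>'n)^('n\<times>'n) \<Rightarrow> complex" where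
  "delta_pair Z = (\<Sum>i\<in>UNIV. \<Sum>j\<in>UNIV. Z $ (i,i) $ (j,j))"

lemma delta_pair_add: "delta_pair (A + B) = delta_pair A + delta_pair B"
  by (simp add: delta_pair_def sum.distrib)

lemma delta_pair_zero: "delta_pair 0 = 0" by (simp add: delta_pair_def)

lemma delta_pair_scaleR: "delta_pair (r *\<^sub>R A) = complex_of_real r * delta_pair A"
  by (simp only: delta_pair_def vector_scaleR_component) (simp add: scaleR_conv_of_real sum_distrib_left)

lemma delta_pair_idtensor: "delta_pair (idtensor X) = mtr X"
  by (simp add: delta_pair_def idtensor_nth mtr_def)

lemma mtr_mult_Delta: "mtr (Z ** Delta) = delta_pair Z"
proof -
  have "mtr (Z ** Delta) = (\<Sum>i\<in>UNIV. \<Sum>k\<in>UNIV. \<Sum>j\<in>UNIV. \<Sum>l\<in>UNIV. if j = l \<and> i = k then Z $ (i,k) $ (j,l) else 0)"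
    unfolding mtr_def matrix_matrix_mult_def sum_UNIV_prod by (intro sum.cong refl) (auto simp: Delta_def mult_if_one_zero)
  also have "\<dots> = delta_pair Z" unfolding delta_pair_def sum4_if_diag ..
  finally show ?thesis .
qed

lemma hs_inner_Delta: "hs_inner Delta Y = delta_pair Y"
proof -
  have "hs_inner Delta Y = (\<Sum>i\<in>UNIV. \<Sum>k\<in>UNIV. \<Sum>j\<in>UNIV. \<Sum>l\<in>UNIV. if j = l \<and> i = k then Y $ (i,k) $ (j,l) else 0)"
    unfolding hs_inner_def sum_UNIV_prod by (intro sum.cong refl) (auto simp: Delta_def mult_if_one_zero)
  also have "\<dots> = delta_pair Y" unfolding delta_pair_def sum4_if_diag ..
  finally show ?thesis .
qed

lemma Im_delta_pair_hermitian:
  assumes "hermitian Z"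
  shows "Im (delta_pair Z) = 0"
proof -
  have h: "\<And>i j. cnj (Z $ i $ j) = Z $ j $ i" using assms hermitian_iff_cnj_nth by blast
  have "cnj (delta_pair Z) = (\<Sum>i\<in>UNIV. \<Sum>j\<in>UNIV. Z $ (j,j) $ (i,i))" by (simp add: delta_pair_def h)
  also have "\<dots> = delta_pair Z" unfolding delta_pair_def by (rule sum.swap)
  finally show ?thesis by (metis Reals_cnj_iff complex_is_Real_iff)
qed

lemma hermitian_Delta: "hermitian Delta"
  by (auto simp: hermitian_def vec_eq_iff adj_nth Delta_def)

lemma quad_form_Delta: "quad_form Delta v = cnj (\<Sum>i\<in>UNIV. v $ (i,i)) * (\<Sum>j\<in>UNIV. v $ (j,j))"
proof -
  have "quad_form Delta v = (\<Sum>i\<in>UNIV. \<Sum>k\<in>UNIV. \<Sum>j\<in>UNIV. \<Sum>l\<in>UNIV. if j = l \<and> i = k then cnj (v $ (i,k)) * v $ (j,l) else 0)"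
    unfolding quad_form_def sum_UNIV_prod by (intro sum.cong refl) (auto simp: Delta_def mult_if_one_zero)
  also have "\<dots> = (\<Sum>i\<in>UNIV. \<Sum>j\<in>UNIV. cnj (v $ (i,i)) * v $ (j,j))" unfolding sum4_if_diag ..
  also have "\<dots> = cnj (\<Sum>i\<in>UNIV. v $ (i,i)) * (\<Sum>j\<in>UNIV. v $ (j,j))" by (simp add: sum_product)
  finally show ?thesis .
qed

lemma psd_Delta: "psd Delta"
  unfolding psd_iff_quad_form quad_form_Delta cnj_mult_self by simp

lemma sum_square_le_card_sum_squares:
  "(\<Sum>i\<in>(UNIV::'a::finite set). a i)\<^sup>2 \<le> real CARD('a) * (\<Sum>i\<in>UNIV. (a i)\<^sup>2)"
  using Cauchy_Schwarz_ineq_sum[of a "\<lambda>_. 1" UNIV] by (simp add: mult.commute)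

lemma psd_card_mat1_diff_Delta:
  "psd (smat (of_nat CARD('n)) (mat 1) - (Delta :: complex^('n::finite\<times>'n)^('n\<times>'n)))"
  unfolding psd_iff_quad_form
proof
  fix v :: "complex^('n\<times>'n)"
  define s where "s = (\<Sum>i\<in>UNIV. v $ (i,i))"
  define n where "n = real CARD('n)"
  have q: "quad_form (smat (of_nat CARD('n)) (mat 1) - Delta) v = complex_of_real n * (\<Sum>p\<in>UNIV. cnj (v $ p) * v $ p) - cnj s * s"
    unfolding quad_form_diff quad_form_smat quad_form_mat1 quad_form_Delta s_def n_def by simp
  have im: "Im (\<Sum>p\<in>UNIV. cnj (v $ p) * v $ p) = 0" unfolding Im_sum cnj_mult_self by simp
  have re: "Re (\<Sum>p\<in>UNIV. cnj (v $ p) * v $ p) = (\<Sum>i\<in>UNIV. \<Sum>k\<in>UNIV. (cmod (v $ (i,k)))\<^sup>2)"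
    unfolding Re_sum sum_UNIV_prod by (simp add: cmod_power2) (simp add: power2_eq_square)
  have "cmod s \<le> (\<Sum>i\<in>UNIV. cmod (v $ (i,i)))" unfolding s_def by (rule norm_sum)
  then have "(cmod s)\<^sup>2 \<le> (\<Sum>i\<in>UNIV. cmod (v $ (i,i)))\<^sup>2" by (simp add: power_mono)
  also have "\<dots> \<le> n * (\<Sum>i\<in>UNIV. (cmod (v $ (i,i)))\<^sup>2)" unfolding n_def by (rule sum_square_le_card_sum_squares)
  also have "\<dots> \<le> n * (\<Sum>i\<in>UNIV. \<Sum>k\<in>UNIV. (cmod (v $ (i,k)))\<^sup>2)"
  proof -
    have "(cmod (v $ (i,i)))\<^sup>2 \<le> (\<Sum>k\<in>UNIV. (cmod (v $ (i,k)))\<^sup>2)" for i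
      using member_le_sum[of i UNIV "\<lambda>k. (cmod (v $ (i,k)))\<^sup>2"] by simp
    then show ?thesis unfolding n_def by (intro mult_left_mono sum_mono) auto
  qed
  finally have ineq: "(cmod s)\<^sup>2 \<le> n * (\<Sum>i\<in>UNIV. \<Sum>k\<in>UNIV. (cmod (v $ (i,k)))\<^sup>2)" .
  have "Re (cnj s * s) = (cmod s)\<^sup>2" by (simp add: cmod_power2) (simp add: power2_eq_square)
  moreover have "Im (cnj s * s) = 0" by simp
  ultimately show "Im (quad_form (smat (of_nat CARD('n)) (mat 1) - Delta) v) = 0 \<and> 0 \<le> Re (quad_form (smat (of_nat CARD('n)) (mat 1) - Delta) v)"
    unfolding q using im re ineq by simp
qed

section \<open>The Choi correspondence\<close>

definition matrix_unit :: "'n \<Rightarrow> 'n \<Rightarrow> complex^'n^'n" where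
  "matrix_unit i j = (\<chi> a b. if a = i \<and> b = j then 1 else 0)"

lemma matrix_unit_nth: "matrix_unit i j $ a $ b = (if a = i \<and> b = j then 1 else 0)" by (simp add: matrix_unit_def)

lemma sesq_matrix_unit:
  "(\<Sum>a\<in>UNIV. \<Sum>b\<in>UNIV. cnj (x $ a) * matrix_unit s t $ a $ b * y $ b) = cnj (x $ s) * y $ t"
proof -
  have inner: "(\<Sum>b\<in>UNIV. cnj (x $ a) * matrix_unit s t $ a $ b * y $ b) = (if a = s then cnj (x $ a) * y $ t else 0)" for a
  proof (cases "a = s")
    case True
    then have "(\<Sum>b\<in>UNIV. cnj (x $ a) * matrix_unit s t $ a $ b * y $ b) = (\<Sum>b\<in>UNIV. if b = t then cnj (x $ a) * y $ b else 0)"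
      by (intro sum.cong refl) (simp add: matrix_unit_nth)
    also have "\<dots> = cnj (x $ a) * y $ t" by simp
    finally show ?thesis using True by simp
  next
    case False
    then show ?thesis by (simp add: matrix_unit_nth)
  qed
  show ?thesis unfolding inner by simp
qed

lemma sum_matrix_unit_diag: "(\<Sum>i\<in>UNIV. matrix_unit i i) = mat 1"
proof -
  have "(\<Sum>x\<in>UNIV. matrix_unit x x $ a $ b) = mat 1 $ a $ b" for a b
  proof -
    have "(\<Sum>x\<in>UNIV. matrix_unit x x $ a $ b) = (\<Sum>x\<in>UNIV. if x = a then (if a = b then 1 else 0) else 0)"
      by (intro sum.cong refl) (auto simp: matrix_unit_nth)
    also have "\<dots> = mat 1 $ a $ b" by (simp add: mat_def)
    finally show ?thesis .
  qed
  then show ?thesis unfolding vec_eq_iff sum_component by blast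
qed

definition choi ::
    "(complex^'n^'n \<Rightarrow> complex^'n^'n) \<Rightarrow> complex^('n\<times>'n)^('n\<times>'n)" where
  "choi f = (\<chi> p q. f (matrix_unit (fst p) (fst q)) $ snd p $ snd q)"

lemma block_choi: "block (choi \<phi>) i j = \<phi> (matrix_unit i j)"
  by (simp add: vec_eq_iff block_def choi_def)

lemma choi_diff_id: "choi (\<lambda>A. \<phi> A - A) = choi \<phi> - Delta"
  by (auto simp: vec_eq_iff choi_def Delta_def matrix_unit_nth)

lemma clin_zero:
  assumes "clin \<phi>"
  shows "\<phi> 0 = 0"
proof -
  have "\<phi> 0 = \<phi> (smat 0 0)" by (simp add: smat_zero_left)
  also have "\<dots> = smat 0 (\<phi> 0)" using assms clin_def by blast
  finally show ?thesis by (simp add: smat_zero_left)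
qed

lemma clin_sum:
  assumes "clin \<phi>" "finite K"
  shows "\<phi> (\<Sum>x\<in>K. X x) = (\<Sum>x\<in>K. \<phi> (X x))"
  using assms(2)
proof (induction K rule: finite_induct)
  case empty then show ?case using clin_zero[OF assms(1)] by simp
next
  case (insert x F)
  then show ?case using assms(1) unfolding clin_def by simp
qed

lemma ptrace1_choi:
  assumes "clin \<phi>"
  shows "ptrace1 (choi \<phi>) = \<phi> (mat 1)"
proof -
  have "ptrace1 (choi \<phi>) = (\<Sum>i\<in>UNIV. \<phi> (matrix_unit i i))"
    by (simp add: vec_eq_iff ptrace1_def choi_def)
  also have "\<dots> = \<phi> (\<Sum>i\<in>UNIV. matrix_unit i i)" by (rule clin_sum[OF assms, symmetric]) simp
  finally show ?thesis by (simp add: sum_matrix_unit_diag)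
qed

definition choi_map ::
    "complex^('n\<times>'n)^('n\<times>'n) \<Rightarrow> complex^'n^'n \<Rightarrow> complex^'n^'n" where
  "choi_map C A = (\<chi> k l. \<Sum>i\<in>UNIV. \<Sum>j\<in>UNIV. A $ i $ j * C $ (i,k) $ (j,l))"

lemma choi_map_nth: "choi_map C A $ k $ l = (\<Sum>i\<in>UNIV. \<Sum>j\<in>UNIV. A $ i $ j * C $ (i,k) $ (j,l))"
  by (simp add: choi_map_def)

lemma clin_choi_map: "clin (choi_map C)"
  unfolding clin_def
  by (simp add: vec_eq_iff choi_map_nth smat_nth distrib_right sum.distrib sum_distrib_left mult.assoc)

lemma choi_map_add: "choi_map (C + D) A = choi_map C A + choi_map D A"
  by (simp add: vec_eq_iff choi_map_nth distrib_left sum.distrib)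

lemma choi_map_Delta: "choi_map Delta A = A"
proof -
  have "(\<Sum>i\<in>UNIV. \<Sum>j\<in>UNIV. A $ i $ j * Delta $ (i,k) $ (j,l)) = A $ k $ l" for k l
  proof -
    have "(\<Sum>i\<in>UNIV. \<Sum>j\<in>UNIV. A $ i $ j * Delta $ (i,k) $ (j,l))
       = (\<Sum>i\<in>UNIV. if i = k then (\<Sum>j\<in>UNIV. if j = l then A $ i $ j else 0) else 0)"
      by (intro sum.cong refl) (auto simp: Delta_def mult_if_one_zero)
    also have "\<dots> = A $ k $ l" by simp
    finally show ?thesis .
  qed
  then show ?thesis by (simp add: vec_eq_iff choi_map_nth del: sum.delta)
qed

lemma choi_map_mat1: "choi_map C (mat 1) = ptrace1 C"
proof -
  have "(\<Sum>i\<in>UNIV. \<Sum>j\<in>UNIV. mat 1 $ i $ j * C $ (i,k) $ (j,l)) = (\<Sum>i\<in>UNIV. C $ (i,k) $ (i,l))" for k l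
  proof -
    have "(\<Sum>i\<in>UNIV. \<Sum>j\<in>UNIV. mat 1 $ i $ j * C $ (i,k) $ (j,l))
       = (\<Sum>i\<in>UNIV. \<Sum>j\<in>UNIV. if j = i then C $ (i,k) $ (j,l) else 0)"
      by (intro sum.cong refl) (auto simp: mat_def)
    also have "\<dots> = (\<Sum>i\<in>UNIV. C $ (i,k) $ (i,l))" by simp
    finally show ?thesis .
  qed
  then show ?thesis by (simp add: vec_eq_iff choi_map_nth ptrace1_def)
qed

lemma choi_map_eq_sum_blocks: "choi_map C A = (\<Sum>i\<in>UNIV. \<Sum>j\<in>UNIV. smat (A $ i $ j) (block C i j))"
  by (simp add: vec_eq_iff choi_map_nth smat_nth block_nth)

text \<open>If \<open>C = \<Sum>\<^sub>r w\<^sub>r w\<^sub>r\<^sup>*\<close>, then \<open>choi_map C A = \<Sum>\<^sub>r V\<^sub>r\<^sup>* A V\<^sub>r\<close> with \<open>V\<^sub>r = kraus w\<^sub>r\<close>.\<close>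
definition kraus :: "complex^('n\<times>'n) \<Rightarrow> complex^'n \<Rightarrow> complex^'n" where
  "kraus w p = (\<chi> i. \<Sum>x\<in>UNIV. p $ x * cnj (w $ (i,x)))"

lemma sum_swap_pairs:
  "(\<Sum>x\<in>A. \<Sum>y\<in>B. \<Sum>i\<in>C. \<Sum>j\<in>D. g x y i j)
    = (\<Sum>i\<in>C. \<Sum>j\<in>D. \<Sum>x\<in>A. \<Sum>y\<in>B. g x y i j)"
proof -
  have "(\<Sum>x\<in>A. \<Sum>y\<in>B. \<Sum>i\<in>C. \<Sum>j\<in>D. g x y i j) = (\<Sum>i\<in>C. \<Sum>x\<in>A. \<Sum>y\<in>B. \<Sum>j\<in>D. g x y i j)"
    by (rule sum_rotate3)
  also have "\<dots> = (\<Sum>i\<in>C. \<Sum>j\<in>D. \<Sum>x\<in>A. \<Sum>y\<in>B. g x y i j)"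
    by (intro sum.cong refl sum_rotate3)
  finally show ?thesis .
qed

lemma sum_reorder5:
  "(\<Sum>x\<in>A. \<Sum>y\<in>B. \<Sum>i\<in>C. \<Sum>j\<in>D. \<Sum>r\<in>R. f x y i j r)
       = (\<Sum>r\<in>R. \<Sum>i\<in>C. \<Sum>j\<in>D. \<Sum>x\<in>A. \<Sum>y\<in>B. f x y i j r)"
proof -
  have "(\<Sum>x\<in>A. \<Sum>y\<in>B. \<Sum>i\<in>C. \<Sum>j\<in>D. \<Sum>r\<in>R. f x y i j r)
     = (\<Sum>x\<in>A. \<Sum>y\<in>B. \<Sum>r\<in>R. \<Sum>i\<in>C. \<Sum>j\<in>D. f x y i j r)"
    by (intro sum.cong refl sum_rotate3)
  also have "\<dots> = (\<Sum>r\<in>R. \<Sum>x\<in>A. \<Sum>y\<in>B. \<Sum>i\<in>C. \<Sum>j\<in>D. f x y i j r)"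
    by (rule sum_rotate3)
  also have "\<dots> = (\<Sum>r\<in>R. \<Sum>i\<in>C. \<Sum>j\<in>D. \<Sum>x\<in>A. \<Sum>y\<in>B. f x y i j r)"
    by (intro sum.cong refl sum_swap_pairs)
  finally show ?thesis .
qed

lemma sesq_choi_map_sum_rank_one:
  fixes w :: "'r::finite \<Rightarrow> complex^('n::finite\<times>'n)"
  shows "(\<Sum>x\<in>UNIV. \<Sum>y\<in>UNIV. cnj (p $ x) * (\<Sum>i\<in>UNIV. \<Sum>j\<in>UNIV. M $ i $ j * (\<Sum>r\<in>UNIV. w r $ (i,x) * cnj (w r $ (j,y)))) * q $ y)
   = (\<Sum>r\<in>UNIV. \<Sum>i\<in>UNIV. \<Sum>j\<in>UNIV. cnj (kraus (w r) p $ i) * M $ i $ j * kraus (w r) q $ j)"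
proof -
  have "(\<Sum>x\<in>UNIV. \<Sum>y\<in>UNIV. cnj (p $ x) * (\<Sum>i\<in>UNIV. \<Sum>j\<in>UNIV. M $ i $ j * (\<Sum>r\<in>UNIV. w r $ (i,x) * cnj (w r $ (j,y)))) * q $ y)
     = (\<Sum>x\<in>UNIV. \<Sum>y\<in>UNIV. \<Sum>i\<in>UNIV. \<Sum>j\<in>UNIV. \<Sum>r\<in>UNIV. cnj (p $ x) * w r $ (i,x) * M $ i $ j * (q $ y * cnj (w r $ (j,y))))"
    by (simp add: sum_distrib_left sum_distrib_right mult_ac)
  also have "\<dots> = (\<Sum>r\<in>UNIV. \<Sum>i\<in>UNIV. \<Sum>j\<in>UNIV. \<Sum>x\<in>UNIV. \<Sum>y\<in>UNIV. cnj (p $ x) * w r $ (i,x) * M $ i $ j * (q $ y * cnj (w r $ (j,y))))"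
    by (rule sum_reorder5)
  also have "\<dots> = (\<Sum>r\<in>UNIV. \<Sum>i\<in>UNIV. \<Sum>j\<in>UNIV. cnj (kraus (w r) p $ i) * M $ i $ j * kraus (w r) q $ j)"
    unfolding kraus_def by (simp add: sum_distrib_left sum_distrib_right mult_ac)
  finally show ?thesis .
qed

lemma block_psd_iff:
  "block_psd k A \<longleftrightarrow> (\<forall>v. Im (\<Sum>i<k. \<Sum>j<k. \<Sum>a\<in>UNIV. \<Sum>b\<in>UNIV. cnj (v i $ a) * A i j $ a $ b * v j $ b) = 0
   \<and> 0 \<le> Re (\<Sum>i<k. \<Sum>j<k. \<Sum>a\<in>UNIV. \<Sum>b\<in>UNIV. cnj (v i $ a) * A i j $ a $ b * v j $ b))"
  unfolding block_psd_def Let_def by simp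

lemma CP_choi_map:
  fixes C :: "complex^('n::finite\<times>'n)^('n\<times>'n)"
  assumes "psd C" shows "CP (choi_map C)"
proof -
  obtain w :: "'n\<times>'n \<Rightarrow> complex^('n\<times>'n)" where w: "C = (\<Sum>r\<in>UNIV. rank_one (w r))"
    using psd_sum_rank_one[OF assms] by blast
  have Cn: "C $ (i,x) $ (j,y) = (\<Sum>r\<in>UNIV. w r $ (i,x) * cnj (w r $ (j,y)))" for i x j y
    unfolding w by (simp add: rank_one_nth)
  have "block_psd k (\<lambda>a b. choi_map C (A a b))" if A: "block_psd k A" for k A
    unfolding block_psd_iff
  proof
    fix v :: "nat \<Rightarrow> complex^'n"
    define u where "u r a = kraus (w r) (v a)" for r a
    have eq: "(\<Sum>a<k. \<Sum>b<k. \<Sum>x\<in>UNIV. \<Sum>y\<in>UNIV. cnj (v a $ x) * choi_map C (A a b) $ x $ y * v b $ y)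
        = (\<Sum>r\<in>UNIV. \<Sum>a<k. \<Sum>b<k. \<Sum>i\<in>UNIV. \<Sum>j\<in>UNIV. cnj (u r a $ i) * A a b $ i $ j * u r b $ j)"
    proof -
      have "(\<Sum>a<k. \<Sum>b<k. \<Sum>x\<in>UNIV. \<Sum>y\<in>UNIV. cnj (v a $ x) * choi_map C (A a b) $ x $ y * v b $ y)
         = (\<Sum>a<k. \<Sum>b<k. \<Sum>r\<in>UNIV. \<Sum>i\<in>UNIV. \<Sum>j\<in>UNIV. cnj (u r a $ i) * A a b $ i $ j * u r b $ j)"
        unfolding choi_map_nth Cn u_def by (intro sum.cong refl sesq_choi_map_sum_rank_one)
      also have "\<dots> = (\<Sum>r\<in>UNIV. \<Sum>a<k. \<Sum>b<k. \<Sum>i\<in>UNIV. \<Sum>j\<in>UNIV. cnj (u r a $ i) * A a b $ i $ j * u r b $ j)"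
        by (rule sum_rotate3)
      finally show ?thesis .
    qed
    have each: "Im (\<Sum>a<k. \<Sum>b<k. \<Sum>i\<in>UNIV. \<Sum>j\<in>UNIV. cnj (u r a $ i) * A a b $ i $ j * u r b $ j) = 0
        \<and> 0 \<le> Re (\<Sum>a<k. \<Sum>b<k. \<Sum>i\<in>UNIV. \<Sum>j\<in>UNIV. cnj (u r a $ i) * A a b $ i $ j * u r b $ j)" for r
      using A unfolding block_psd_iff by blast
    show "Im (\<Sum>a<k. \<Sum>b<k. \<Sum>x\<in>UNIV. \<Sum>y\<in>UNIV. cnj (v a $ x) * choi_map C (A a b) $ x $ y * v b $ y) = 0 \<and>
          0 \<le> Re (\<Sum>a<k. \<Sum>b<k. \<Sum>x\<in>UNIV. \<Sum>y\<in>UNIV. cnj (v a $ x) * choi_map C (A a b) $ x $ y * v b $ y)"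
      unfolding eq Im_sum Re_sum using each by (simp add: sum_nonneg)
  qed
  then show ?thesis unfolding CP_def using clin_choi_map by blast
qed

lemma block_psd_matrix_units:
  fixes h :: "nat \<Rightarrow> 'n::finite" shows "block_psd k (\<lambda>i j. matrix_unit (h i) (h j))"
  unfolding block_psd_iff
proof
  fix v :: "nat \<Rightarrow> complex^'n"
  have "(\<Sum>i<k. \<Sum>j<k. \<Sum>a\<in>UNIV. \<Sum>b\<in>UNIV. cnj (v i $ a) * matrix_unit (h i) (h j) $ a $ b * v j $ b)
     = complex_of_real ((cmod (\<Sum>i<k. v i $ h i))\<^sup>2)"
    unfolding sesq_matrix_unit cnj_mult_self[symmetric] by (simp add: sum_product)
  then show "Im (\<Sum>i<k. \<Sum>j<k. \<Sum>a\<in>UNIV. \<Sum>b\<in>UNIV. cnj (v i $ a) * matrix_unit (h i) (h j) $ a $ b * v j $ b) = 0 \<and>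
     0 \<le> Re (\<Sum>i<k. \<Sum>j<k. \<Sum>a\<in>UNIV. \<Sum>b\<in>UNIV. cnj (v i $ a) * matrix_unit (h i) (h j) $ a $ b * v j $ b)"
    by simp
qed

text \<open>The Choi matrix is the image of the positive block matrix \<open>[E\<^sub>i\<^sub>j]\<close> under the amplification of \<open>\<phi>\<close>,
  after enumerating the index type by \<open>{..<n}\<close>.\<close>
lemma psd_choi_if_CP:
  fixes \<phi> :: "complex^'n^'n \<Rightarrow> complex^'n^'n"
  assumes "CP \<phi>" shows "psd (choi \<phi>)"
  unfolding psd_iff_quad_form
proof
  fix z :: "complex^('n\<times>'n)"
  define k where "k = CARD('n)"
  obtain h where bij: "bij_betw h {..<k} (UNIV::'n set)"
    using ex_bij_betw_nat_finite[of "UNIV::'n set"] unfolding k_def atLeast0LessThan by auto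
  have bp: "block_psd k (\<lambda>i j. \<phi> (matrix_unit (h i) (h j)))"
    using assms block_psd_matrix_units unfolding CP_def by blast
  define v where "v i = (\<chi> x. z $ (h i, x))" for i
  have "(\<Sum>i<k. \<Sum>j<k. \<Sum>a\<in>UNIV. \<Sum>b\<in>UNIV. cnj (v i $ a) * \<phi> (matrix_unit (h i) (h j)) $ a $ b * v j $ b)
    = (\<Sum>i<k. \<Sum>j<k. (\<lambda>t u. \<Sum>a\<in>UNIV. \<Sum>b\<in>UNIV. cnj (z $ (t, a)) * \<phi> (matrix_unit t u) $ a $ b * z $ (u, b)) (h i) (h j))"
    unfolding v_def by simp
  also have "\<dots> = (\<Sum>i<k. (\<lambda>t. \<Sum>u\<in>UNIV. \<Sum>a\<in>UNIV. \<Sum>b\<in>UNIV. cnj (z $ (t, a)) * \<phi> (matrix_unit t u) $ a $ b * z $ (u, b)) (h i))"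
    by (intro sum.cong refl) (rule sum.reindex_bij_betw[OF bij])
  also have "\<dots> = (\<Sum>t\<in>UNIV. \<Sum>u\<in>UNIV. \<Sum>a\<in>UNIV. \<Sum>b\<in>UNIV. cnj (z $ (t, a)) * \<phi> (matrix_unit t u) $ a $ b * z $ (u, b))"
    by (rule sum.reindex_bij_betw[OF bij])
  also have "\<dots> = (\<Sum>t\<in>UNIV. \<Sum>a\<in>UNIV. \<Sum>u\<in>UNIV. \<Sum>b\<in>UNIV. cnj (z $ (t, a)) * \<phi> (matrix_unit t u) $ a $ b * z $ (u, b))"
    by (intro sum.cong refl sum.swap)
  also have "\<dots> = quad_form (choi \<phi>) z"
    unfolding quad_form_def sum_UNIV_prod choi_def by simp
  finally show "Im (quad_form (choi \<phi>) z) = 0 \<and> 0 \<le> Re (quad_form (choi \<phi>) z)"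
    using bp[unfolded block_psd_iff, rule_format, of v] by simp
qed
section \<open>The two semidefinite programs and weak duality\<close>

definition primal_values :: "(complex^'n::finite^'n) set \<Rightarrow> real set" where
  "primal_values S = {lam. \<exists>X::complex^('n\<times>'n)^('n\<times>'n).
      ptrace1 X = smat (complex_of_real (1 - lam)) (mat 1) \<and>
      X + smat (complex_of_real lam) Delta \<in> ampl S \<and> psd X}"

definition dual_values :: "(complex^'n::finite^'n) set \<Rightarrow> real set" where
  "dual_values S = {Re (mtr X) | X Y. hermitian X \<and> hermitian Y \<and> Y \<in> ampl (perp S) \<and>
      mtr ((idtensor X + Y) ** Delta) = 1 \<and> psd (idtensor X + Y)}"

definition max_mixed :: "complex^'n::finite^'n" where
  "max_mixed = smat (complex_of_real (1 / real CARD('n))) (mat 1)"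

lemma hermitian_max_mixed: "hermitian max_mixed"
  unfolding max_mixed_def by (intro hermitian_smat hermitian_mat1)

lemma mtr_max_mixed: "mtr (max_mixed :: complex^'n::finite^'n) = 1"
  by (simp add: max_mixed_def mtr_def smat_nth mat_def)

lemma psd_idtensor_max_mixed: "psd (idtensor max_mixed)"
  unfolding max_mixed_def idtensor_smat idtensor_mat1 by (rule psd_smat[OF psd_mat1]) simp

lemma one_mem_dual_values: "1 \<in> dual_values S"
  unfolding dual_values_def
proof (intro CollectI exI conjI)
  show "1 = Re (mtr max_mixed)" by (simp add: mtr_max_mixed)
  show "mtr ((idtensor max_mixed + 0) ** Delta) = 1"
    by (simp add: mtr_mult_Delta delta_pair_idtensor mtr_max_mixed)
qed (simp_all add: hermitian_max_mixed hermitian_zero ampl_zero[OF csubspace_perp] psd_idtensor_max_mixed)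

text \<open>The witness is \<open>(n I - \<Delta>)/n\<^sup>2\<close>; positivity of \<open>n I - \<Delta>\<close> is Cauchy--Schwarz.\<close>
lemma inverse_card_sq_mem_primal_values:
  fixes S :: "(complex^'n::finite^'n) set"
  assumes ms: "matricial_system S"
  shows "1 / (real CARD('n))\<^sup>2 \<in> primal_values S"
proof -
  define n where "n = real CARD('n)"
  have npos: "0 < n" unfolding n_def by simp
  define c where "c = 1 / n\<^sup>2"
  define N where "N = (of_nat CARD('n) :: complex)"
  have Nn: "N = complex_of_real n" unfolding N_def n_def by simp
  define X where "X = smat (complex_of_real c) (smat N (mat 1) - (Delta :: complex^('n\<times>'n)^('n\<times>'n)))"
  have "psd X" unfolding X_def c_def N_def by (rule psd_smat[OF psd_card_mat1_diff_Delta]) simp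
  moreover have "ptrace1 X = smat (complex_of_real (1 - c)) (mat 1)"
  proof -
    have r: "c * (n * n - 1) = 1 - c" using npos unfolding c_def by (simp add: field_simps power2_eq_square)
    have "ptrace1 X = smat (complex_of_real c) (smat N (smat N (mat 1)) - mat 1)"
      unfolding X_def ptrace1_smat ptrace1_diff ptrace1_Delta ptrace1_mat1 N_def ..
    also have "\<dots> = smat (complex_of_real c * (N * N - 1)) (mat 1)"
      by (simp add: vec_eq_iff smat_nth algebra_simps)
    finally show ?thesis unfolding Nn r[symmetric] by simp
  qed
  moreover have "X + smat (complex_of_real c) Delta = smat (complex_of_real c * N) (mat 1)"
    unfolding X_def by (simp add: vec_eq_iff smat_nth algebra_simps)
  moreover have "smat (complex_of_real c * N) (mat 1) \<in> ampl S"
    using ampl_smat ampl_mat1[OF ms] ms unfolding matricial_system_def by blast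
  ultimately show ?thesis unfolding primal_values_def c_def n_def by auto
qed

text \<open>\<open>0 \<le> \<langle>X, I \<otimes> X' + Y\<rangle> = tr X' - \<lambda>\<close>, because \<open>\<langle>X, I \<otimes> X'\<rangle> = (1 - \<lambda>) tr X'\<close>,
  \<open>X + \<lambda>\<Delta> \<perp> Y\<close> and \<open>\<langle>\<Delta>, Y\<rangle> = 1 - tr X'\<close>.\<close>
lemma weak_duality:
  assumes ms: "matricial_system S" and "lam \<in> primal_values S" and "v \<in> dual_values S"
  shows "lam \<le> v"
proof -
  obtain X where p1: "ptrace1 X = smat (complex_of_real (1 - lam)) (mat 1)"
    and p2: "X + smat (complex_of_real lam) Delta \<in> ampl S" and p3: "psd X"
    using assms(2) unfolding primal_values_def by blast
  obtain X' Y where v: "v = Re (mtr X')" and d1: "Y \<in> ampl (perp S)"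
    and d2: "mtr ((idtensor X' + Y) ** Delta) = 1" and d3: "psd (idtensor X' + Y)"
    using assms(3) unfolding dual_values_def by blast
  have cs: "csubspace S" using ms matricial_system_def by blast
  have "0 \<le> inner X (idtensor X' + Y)" using inner_psd_nonneg[OF p3 d3] .
  also have "inner X (idtensor X' + Y) = inner X (idtensor X') + inner X Y"
    by (simp add: inner_add_right)
  also have "inner X (idtensor X') = (1 - lam) * Re (mtr X')"
    unfolding inner_eq_Re_hs_inner hs_inner_idtensor p1 hs_inner_smat_left hs_inner_mat1_left by simp
  also have "inner X Y = inner (X + smat (complex_of_real lam) Delta) Y - lam * inner Delta Y"
    by (simp add: inner_add_left inner_smat_real_left)
  also have "inner (X + smat (complex_of_real lam) Delta) Y = 0"
    using inner_ampl_ampl_perp[OF cs p2 d1] .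
  also have "inner Delta Y = 1 - Re (mtr X')"
  proof -
    have "delta_pair (idtensor X' + Y) = 1" using d2 unfolding mtr_mult_Delta .
    then have "delta_pair Y = 1 - mtr X'" unfolding delta_pair_add delta_pair_idtensor by (simp add: algebra_simps)
    then show ?thesis unfolding inner_eq_Re_hs_inner hs_inner_Delta by simp
  qed
  finally show ?thesis unfolding v by (simp add: algebra_simps)
qed

section \<open>Strong duality\<close>

definition dual_subspace ::
    "(complex^'n^'n) set \<Rightarrow> (complex^('n::finite\<times>'n)^('n\<times>'n)) set" where
  "dual_subspace S = {idtensor X + Y | X Y. hermitian X \<and> hermitian Y \<and> Y \<in> ampl (perp S)}"

definition separation_set ::
    "(complex^'n^'n) set \<Rightarrow> real \<Rightarrow> ((complex^('n::finite\<times>'n)^('n\<times>'n)) \<times> real \<times> real) set" where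
  "separation_set S t = {(Z - z, Re (delta_pair Z) - 1, Re (mtr Z) - t) | Z z. psd Z \<and> z \<in> dual_subspace S}"

definition separating ::
    "(complex^'n^'n) set \<Rightarrow> real \<Rightarrow> complex^('n::finite\<times>'n)^('n\<times>'n) \<Rightarrow> real \<Rightarrow> real \<Rightarrow> bool" where
  "separating S t B \<beta> \<gamma> \<longleftrightarrow> (\<forall>x\<in>separation_set S t. 0 \<le> (B, \<beta>, \<gamma>) \<bullet> x)"

lemma separation_setI:
  "psd Z \<Longrightarrow> z \<in> dual_subspace S \<Longrightarrow>
    (Z - z, Re (delta_pair Z) - 1, Re (mtr Z) - t) \<in> separation_set S t"
  unfolding separation_set_def by blast

lemma ampl_perp_scaleR: "Y \<in> ampl (perp S) \<Longrightarrow> r *\<^sub>R Y \<in> ampl (perp S)"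
  unfolding scaleR_eq_smat using ampl_smat csubspace_perp by blast

lemma dual_subspace_scaleR:
  assumes "z \<in> dual_subspace S"
  shows "r *\<^sub>R z \<in> dual_subspace S"
proof -
  obtain X Y where "z = idtensor X + Y" "hermitian X" "hermitian Y" "Y \<in> ampl (perp S)"
    using assms unfolding dual_subspace_def by blast
  then have "r *\<^sub>R z = idtensor (r *\<^sub>R X) + r *\<^sub>R Y" "hermitian (r *\<^sub>R X)" "hermitian (r *\<^sub>R Y)"
     "r *\<^sub>R Y \<in> ampl (perp S)"
    by (auto simp: idtensor_scaleR scaleR_add_right hermitian_scaleR ampl_perp_scaleR)
  then show ?thesis unfolding dual_subspace_def by blast
qed

lemma dual_subspace_add:
  assumes "z1 \<in> dual_subspace S" "z2 \<in> dual_subspace S"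
  shows "z1 + z2 \<in> dual_subspace S"
proof -
  obtain X1 Y1 where 1: "z1 = idtensor X1 + Y1" "hermitian X1" "hermitian Y1" "Y1 \<in> ampl (perp S)"
    using assms(1) unfolding dual_subspace_def by blast
  obtain X2 Y2 where 2: "z2 = idtensor X2 + Y2" "hermitian X2" "hermitian Y2" "Y2 \<in> ampl (perp S)"
    using assms(2) unfolding dual_subspace_def by blast
  have "idtensor (X1 + X2) = idtensor X1 + idtensor X2" by (simp add: vec_eq_iff idtensor_nth)
  then have "z1 + z2 = idtensor (X1 + X2) + (Y1 + Y2)" using 1 2 by (simp add: algebra_simps)
  moreover have "hermitian (X1 + X2)" "hermitian (Y1 + Y2)" "Y1 + Y2 \<in> ampl (perp S)"
    using 1 2 hermitian_add ampl_add[OF csubspace_perp 1(4) 2(4)] by auto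
  ultimately show ?thesis unfolding dual_subspace_def by blast
qed

lemma hermitian_if_dual_subspace: "z \<in> dual_subspace S \<Longrightarrow> hermitian z"
  unfolding dual_subspace_def using hermitian_add hermitian_idtensor by blast

lemma dual_subspace_zero:
  fixes S :: "(complex^'n::finite^'n) set"
  shows "0 \<in> dual_subspace S"
proof -
  have "(0::complex^('n\<times>'n)^('n\<times>'n)) = idtensor 0 + 0 \<and> hermitian (0::complex^'n^'n) \<and> hermitian (0::complex^('n\<times>'n)^('n\<times>'n)) \<and> (0::complex^('n\<times>'n)^('n\<times>'n)) \<in> ampl (perp S)"
    by (simp add: idtensor_zero hermitian_zero ampl_zero[OF csubspace_perp])
  then show ?thesis unfolding dual_subspace_def by blast
qed

lemma idtensor_mem_dual_subspace: "hermitian X \<Longrightarrow> idtensor X \<in> dual_subspace S"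
proof -
  assume h: "hermitian X"
  have "idtensor X = idtensor X + 0" by simp
  then show ?thesis unfolding dual_subspace_def using h hermitian_zero ampl_zero[OF csubspace_perp, of S] by blast
qed

lemma convex_separation_set: "convex (separation_set S t)"
  unfolding convex_def
proof (intro ballI allI impI)
  fix x y and u v :: real
  assume x: "x \<in> separation_set S t" and y: "y \<in> separation_set S t" and uv: "0 \<le> u" "0 \<le> v" "u + v = 1"
  obtain Z1 z1 where 1: "x = (Z1 - z1, Re (delta_pair Z1) - 1, Re (mtr Z1) - t)" "psd Z1" "z1 \<in> dual_subspace S"
    using x unfolding separation_set_def by blast
  obtain Z2 z2 where 2: "y = (Z2 - z2, Re (delta_pair Z2) - 1, Re (mtr Z2) - t)" "psd Z2" "z2 \<in> dual_subspace S"
    using y unfolding separation_set_def by blast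
  define Z where "Z = u *\<^sub>R Z1 + v *\<^sub>R Z2"
  define z where "z = u *\<^sub>R z1 + v *\<^sub>R z2"
  have pZ: "psd Z" unfolding Z_def using 1 2 uv psd_add psd_scaleR by blast
  have lz: "z \<in> dual_subspace S" unfolding z_def using 1 2 dual_subspace_add dual_subspace_scaleR by blast
  have e1: "u *\<^sub>R (Z1 - z1) + v *\<^sub>R (Z2 - z2) = Z - z"
    unfolding Z_def z_def by (simp add: algebra_simps)
  have e2: "u * (Re (delta_pair Z1) - 1) + v * (Re (delta_pair Z2) - 1) = Re (delta_pair Z) - 1"
    unfolding Z_def delta_pair_add delta_pair_scaleR using uv by (simp add: algebra_simps)
  have e3: "u * (Re (mtr Z1) - t) + v * (Re (mtr Z2) - t) = Re (mtr Z) - t"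
  proof -
    have "u * (Re (mtr Z1) - t) + v * (Re (mtr Z2) - t)
        = u * Re (mtr Z1) + v * Re (mtr Z2) - (u + v) * t" by (simp add: algebra_simps)
    then show ?thesis unfolding Z_def mtr_add mtr_scaleR using uv by simp
  qed
  show "u *\<^sub>R x + v *\<^sub>R y \<in> separation_set S t"
    unfolding 1 2 using separation_setI[OF pZ lz, of t] e1 e2 e3 by simp
qed

lemma zero_notin_separation_set:
  fixes S :: "(complex^'n::finite^'n) set"
  assumes ms: "matricial_system S" and lt: "\<forall>v\<in>dual_values S. t < v"
  shows "0 \<notin> separation_set S (real CARD('n) * t)"
proof
  assume "0 \<in> separation_set S (real CARD('n) * t)"
  then obtain X Y where pZ: "psd (idtensor X + Y)" and hX: "hermitian X" and hY: "hermitian Y"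
    and Yp: "Y \<in> ampl (perp S)" and d: "Re (delta_pair (idtensor X + Y)) = 1"
    and m: "Re (mtr (idtensor X + Y)) = real CARD('n) * t"
    unfolding separation_set_def dual_subspace_def zero_prod_def by auto
  have "Im (delta_pair (idtensor X + Y)) = 0" using Im_delta_pair_hermitian psd_hermitian[OF pZ] by blast
  then have "mtr ((idtensor X + Y) ** Delta) = 1" using d by (simp add: mtr_mult_Delta complex_eq_iff)
  then have "Re (mtr X) \<in> dual_values S" unfolding dual_values_def using hX hY Yp pZ by blast
  moreover have "Re (mtr X) = t"
    using m unfolding mtr_add mtr_idtensor mtr_ampl_perp[OF ms Yp] by simp
  ultimately show False using lt by fastforce
qed

lemma nonneg_if_nonneg_on_ray:
  fixes K c :: real
  assumes "\<And>s. 0 \<le> s \<Longrightarrow> 0 \<le> s * K + c" shows "0 \<le> K"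
proof (rule ccontr)
  assume K: "\<not> 0 \<le> K"
  then have "0 \<le> (\<bar>c\<bar> + 1) / - K" by (intro divide_nonneg_pos) auto
  then have "0 \<le> ((\<bar>c\<bar> + 1) / - K) * K + c" by (rule assms)
  also have "\<dots> = c - \<bar>c\<bar> - 1" using K by (simp add: field_simps)
  finally show False by linarith
qed

lemma separating_ineq:
  "separating S t B \<beta> \<gamma> \<Longrightarrow> psd Z \<Longrightarrow> z \<in> dual_subspace S \<Longrightarrow>
    0 \<le> inner B (Z - z) + \<beta> * (Re (delta_pair Z) - 1) + \<gamma> * (Re (mtr Z) - t)"
  unfolding separating_def using separation_setI[of Z z S t] by auto

lemma separating_offset_nonneg: "separating S t B \<beta> \<gamma> \<Longrightarrow> 0 \<le> - \<beta> - \<gamma> * t"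
  using separating_ineq[OF _ psd_zero dual_subspace_zero] by (simp add: delta_pair_zero mtr_zero)

lemma separating_orth_dual_subspace:
  assumes sep: "separating S t B \<beta> \<gamma>" and z: "z \<in> dual_subspace S"
  shows "inner B z = 0"
proof -
  have h: "0 \<le> s * inner B z + (- \<beta> - \<gamma> * t)" for s
    using separating_ineq[OF sep psd_zero dual_subspace_scaleR[OF z, of "- s"]]
    by (simp add: delta_pair_zero mtr_zero)
  have "0 \<le> inner B z" by (rule nonneg_if_nonneg_on_ray) (rule h)
  moreover have "0 \<le> - inner B z"
  proof (rule nonneg_if_nonneg_on_ray)
    fix s :: real
    show "0 \<le> s * - inner B z + (- \<beta> - \<gamma> * t)" using h[of "- s"] by simp
  qed
  ultimately show ?thesis by simp
qed

text \<open>Testing the separation with the positive matrices \<open>s v v\<^sup>*\<close>, \<open>s \<ge> 0\<close>, paired against \<open>L = 0\<close>.\<close>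
lemma separating_psd:
  assumes sep: "separating S t B \<beta> \<gamma>" and hB: "hermitian B"
  shows "psd (B + smat (complex_of_real \<beta>) Delta + smat (complex_of_real \<gamma>) (mat 1))" (is "psd ?M")
  unfolding psd_iff_quad_form
proof
  fix v
  have h: "0 \<le> s * Re (quad_form ?M v) + (- \<beta> - \<gamma> * t)" if "0 \<le> s" for s
  proof -
    have "inner ?M (rank_one v) = inner B (rank_one v) + \<beta> * Re (delta_pair (rank_one v)) + \<gamma> * Re (mtr (rank_one v))"
      unfolding inner_add_left inner_smat_real_left inner_mat1 by (simp add: inner_eq_Re_hs_inner hs_inner_Delta)
    then show ?thesis
      using separating_ineq[OF sep psd_scaleR[OF psd_rank_one that] dual_subspace_zero]
      unfolding delta_pair_scaleR mtr_scaleR inner_rank_one[symmetric] by (simp add: algebra_simps)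
  qed
  have "0 \<le> Re (quad_form ?M v)" by (rule nonneg_if_nonneg_on_ray) (rule h)
  moreover have "hermitian ?M" using hB hermitian_add hermitian_smat hermitian_Delta hermitian_mat1 by metis
  ultimately show "Im (quad_form ?M v) = 0 \<and> 0 \<le> Re (quad_form ?M v)"
    using Im_quad_form_hermitian by blast
qed

lemma ptrace1_eq_0_if_orth_dual_subspace:
  assumes hB: "hermitian B" and orth: "\<And>z. z \<in> dual_subspace S \<Longrightarrow> inner B z = 0"
  shows "ptrace1 B = 0"
proof -
  have "inner B (idtensor (ptrace1 B)) = 0"
    using orth idtensor_mem_dual_subspace[OF hermitian_ptrace1[OF hB]] by blast
  then have "inner (ptrace1 B) (ptrace1 B) = 0" unfolding inner_eq_Re_hs_inner hs_inner_idtensor .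
  then show ?thesis by simp
qed

text \<open>The hermitian matrix with blocks \<open>C\<close> at \<open>(i, j)\<close> and \<open>C\<^sup>*\<close> at \<open>(j, i)\<close> tests the block \<open>B\<^sub>i\<^sub>j\<close>.\<close>
lemma inner_sym_blocks:
  assumes hB: "hermitian B"
  shows "inner B (of_blocks (\<lambda>a b. (if a = i \<and> b = j then C else 0) + (if a = j \<and> b = i then adj C else 0)))
    = 2 * inner C (block B i j)"
proof -
  have "hs_inner B (of_blocks (\<lambda>a b. (if a = i \<and> b = j then C else 0) + (if a = j \<and> b = i then adj C else 0)))
      = (\<Sum>a\<in>UNIV. \<Sum>b\<in>UNIV. if a = i \<and> b = j then hs_inner (block B a b) C else 0)
        + (\<Sum>a\<in>UNIV. \<Sum>b\<in>UNIV. if a = j \<and> b = i then hs_inner (block B a b) (adj C) else 0)"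
    unfolding hs_inner_blocks block_of_blocks hs_inner_add_right hs_inner_if_right by (simp add: sum.distrib)
  also have "\<dots> = hs_inner (block B i j) C + cnj (hs_inner (block B i j) C)"
    unfolding sum_sum_if_eq block_hermitian[OF hB, of j i] hs_inner_adj_adj ..
  finally show ?thesis unfolding inner_eq_Re_hs_inner hs_inner_commute[of C] by simp
qed

lemma ampl_if_orth_dual_subspace:
  assumes ms: "matricial_system S" and hB: "hermitian B"
    and orth: "\<And>z. z \<in> dual_subspace S \<Longrightarrow> inner B z = 0"
  shows "B \<in> ampl S"
  unfolding ampl_iff_block
proof (intro allI)
  fix i j
  have "inner C (block B i j) = 0" if C: "C \<in> perp S" for C
  proof -
    define F where "F a b = (if a = i \<and> b = j then C else 0) + (if a = j \<and> b = i then adj C else 0)" for a b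
    have "F b a = adj (F a b)" for a b
    proof -
      have "adj (if a = i \<and> b = j then C else 0) = (if b = j \<and> a = i then adj C else 0)"
        "adj (if a = j \<and> b = i then adj C else 0) = (if b = i \<and> a = j then C else 0)"
        by (simp_all add: adj_zero adj_adj)
      then show ?thesis unfolding F_def adj_add by (simp only: add.commute)
    qed
    then have "hermitian (of_blocks F)" by (rule hermitian_of_blocks)
    moreover have "F a b \<in> perp S" for a b
    proof -
      have "0 \<in> perp S" "\<And>A B. A \<in> perp S \<Longrightarrow> B \<in> perp S \<Longrightarrow> A + B \<in> perp S"
        using csubspace_perp[of S] unfolding csubspace_def by blast+
      then show ?thesis unfolding F_def using C adj_mem_perp[OF ms C] by simp
    qed
    then have "of_blocks F \<in> ampl (perp S)" unfolding ampl_iff_block block_of_blocks by blast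
    ultimately have "idtensor 0 + of_blocks F \<in> dual_subspace S"
      unfolding dual_subspace_def using hermitian_zero by blast
    then show ?thesis
      using orth inner_sym_blocks[OF hB, of i j C] unfolding F_def idtensor_zero by simp
  qed
  then have "block B i j \<in> orthogonal_comp (perp S)"
    unfolding orthogonal_comp_def orthogonal_def by blast
  then show "block B i j \<in> S" using ms orthogonal_comp_perp unfolding matricial_system_def by blast
qed

text \<open>Pairing with \<open>s (I \<otimes> I/n)\<close>, a point of positive cone and subspace at once, whose dual value
  \<open>1\<close> exceeds \<open>t\<close>.\<close>
lemma separating_gamma_nonneg:
  fixes S :: "(complex^'n::finite^'n) set"
  assumes sep: "separating S (real CARD('n) * t) B \<beta> \<gamma>" and t1: "t < 1"
  shows "0 \<le> \<gamma>" and "\<gamma> = 0 \<Longrightarrow> \<beta> = 0"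
proof -
  define n where "n = real CARD('n)"
  have npos: "0 < n" unfolding n_def by simp
  have ineq: "0 \<le> \<beta> * (s - 1) + \<gamma> * (s * n - n * t)" if "0 \<le> s" for s
    using separating_ineq[OF sep psd_scaleR[OF psd_idtensor_max_mixed that]
        dual_subspace_scaleR[OF idtensor_mem_dual_subspace[OF hermitian_max_mixed], of s]]
    unfolding delta_pair_scaleR mtr_scaleR delta_pair_idtensor mtr_idtensor mtr_max_mixed n_def
    by simp
  have "0 \<le> \<gamma> * (n * (1 - t))" using ineq[of 1] by (simp add: algebra_simps)
  moreover have "0 < n * (1 - t)" using npos t1 by simp
  ultimately show "0 \<le> \<gamma>" by (simp add: zero_le_mult_iff)
  assume "\<gamma> = 0"
  then show "\<beta> = 0" using ineq[of 2] separating_offset_nonneg[OF sep] by auto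
qed

text \<open>For \<open>\<gamma> > 0\<close>, \<open>(B + \<beta>\<Delta> + \<gamma> I)/(\<gamma> n)\<close> is a primal point of value \<open>-\<beta>/(\<gamma> n) \<ge> t\<close>.\<close>
lemma primal_value_from_separator:
  fixes S :: "(complex^'n::finite^'n) set"
  assumes ms: "matricial_system S" and pB: "ptrace1 B = 0" and aB: "B \<in> ampl S"
    and pM: "psd (B + smat (complex_of_real \<beta>) Delta + smat (complex_of_real \<gamma>) (mat 1))"
    and g: "0 < \<gamma>" and c0: "0 \<le> - \<beta> - \<gamma> * (real CARD('n) * t)"
  shows "\<exists>lam\<in>primal_values S. t \<le> lam"
proof -
  define n where "n = real CARD('n)"
  have npos: "0 < n" unfolding n_def by simp
  define c where "c = 1 / (\<gamma> * n)"
  define lam where "lam = - \<beta> / (\<gamma> * n)"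
  define M where "M = B + smat (complex_of_real \<beta>) Delta + smat (complex_of_real \<gamma>) (mat 1)"
  define X where "X = smat (complex_of_real c) M"
  have gn: "0 < \<gamma> * n" using g npos by simp
  have c0': "0 \<le> c" unfolding c_def using gn by simp
  have psdX: "psd X" unfolding X_def using psd_smat[OF pM[folded M_def] c0'] .
  have r1: "c * (\<beta> + \<gamma> * n) = 1 - lam" unfolding c_def lam_def using g npos by (simp add: add_divide_distrib)
  have r2: "c * \<beta> + lam = 0" unfolding c_def lam_def using gn by (simp add: field_simps)
  have r3: "c * \<gamma> = 1 / n" unfolding c_def using g npos by (simp add: field_simps)
  have "ptrace1 M = smat (complex_of_real (\<beta> + \<gamma> * n)) (mat 1)"
    unfolding M_def ptrace1_add ptrace1_smat pB ptrace1_Delta ptrace1_mat1 n_def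
    by (simp add: vec_eq_iff smat_nth algebra_simps)
  then have p1: "ptrace1 X = smat (complex_of_real (1 - lam)) (mat 1)"
    unfolding X_def ptrace1_smat r1[symmetric] by (simp add: vec_eq_iff smat_nth)
  have "X + smat (complex_of_real lam) Delta = smat (complex_of_real c) B + smat (complex_of_real (c * \<gamma>)) (mat 1)"
  proof -
    have "\<And>p q. complex_of_real c * (B $ p $ q + complex_of_real \<beta> * Delta $ p $ q + complex_of_real \<gamma> * mat 1 $ p $ q)
        + complex_of_real lam * Delta $ p $ q
        = complex_of_real c * B $ p $ q + complex_of_real (c * \<gamma>) * mat 1 $ p $ q
          + complex_of_real (c * \<beta> + lam) * Delta $ p $ q"
      by (simp add: algebra_simps)
    then show ?thesis unfolding X_def M_def using r2 by (simp add: vec_eq_iff smat_nth)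
  qed
  moreover have "smat (complex_of_real c) B + smat (complex_of_real (c * \<gamma>)) (mat 1) \<in> ampl S"
    using ms aB ampl_add ampl_smat ampl_mat1 matricial_system_def by metis
  ultimately have p2: "X + smat (complex_of_real lam) Delta \<in> ampl S" by simp
  have "t * (\<gamma> * n) \<le> - \<beta>" using c0 unfolding n_def by (simp add: algebra_simps)
  then have "t \<le> - \<beta> / (\<gamma> * n)" by (simp only: pos_le_divide_eq[OF gn])
  then have "t \<le> lam" unfolding lam_def .
  then show ?thesis using p1 p2 psdX unfolding primal_values_def by blast
qed

lemma subspace_hermitian_fst: "subspace {x :: (complex^'m^'m) \<times> real \<times> real. hermitian (fst x)}"
  unfolding subspace_def by (auto simp: hermitian_zero hermitian_add hermitian_scaleR)

lemma separating_functional_exists: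
  fixes S :: "(complex^'n::finite^'n) set"
  assumes ms: "matricial_system S" and lt: "\<forall>v\<in>dual_values S. t < v"
  obtains B \<beta> \<gamma> where "hermitian B" "(B, \<beta>, \<gamma>) \<noteq> 0" "separating S (real CARD('n) * t) B \<beta> \<gamma>"
proof -
  define T where "T = separation_set S (real CARD('n) * t)"
  have "convex T" unfolding T_def by (rule convex_separation_set)
  moreover have "T \<noteq> {}" unfolding T_def using separation_setI[OF psd_zero dual_subspace_zero] by blast
  moreover have "0 \<notin> T" unfolding T_def using zero_notin_separation_set[OF ms lt] .
  ultimately obtain a where aspan: "a \<in> span T" and anz: "a \<noteq> 0" and asep: "\<And>x. x \<in> T \<Longrightarrow> 0 \<le> a \<bullet> x"
    using separating_hyperplane_set_0_inspan by metis
  obtain B \<beta> \<gamma> where a: "a = (B, \<beta>, \<gamma>)" by (cases a) auto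
  have "T \<subseteq> {x. hermitian (fst x)}"
    unfolding T_def separation_set_def
    using hermitian_diff psd_hermitian hermitian_if_dual_subspace by fastforce
  then have "span T \<subseteq> {x. hermitian (fst x)}" using span_minimal subspace_hermitian_fst by blast
  then have "hermitian B" using aspan a by auto
  moreover have "separating S (real CARD('n) * t) B \<beta> \<gamma>"
    unfolding separating_def using asep unfolding a T_def by blast
  ultimately show ?thesis using that anz a by blast
qed

lemma strong_duality:
  fixes S :: "(complex^'n::finite^'n) set"
  assumes ms: "matricial_system S" and lt: "\<forall>v\<in>dual_values S. t < v"
  shows "\<exists>lam\<in>primal_values S. t \<le> lam"
proof -
  obtain B \<beta> \<gamma> where hB: "hermitian B" and nz: "(B, \<beta>, \<gamma>) \<noteq> 0"
    and sep: "separating S (real CARD('n) * t) B \<beta> \<gamma>"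
    using separating_functional_exists[OF ms lt] .
  have t1: "t < 1" using lt one_mem_dual_values by blast
  have orth: "\<And>z. z \<in> dual_subspace S \<Longrightarrow> inner B z = 0"
    using separating_orth_dual_subspace[OF sep] .
  have pM: "psd (B + smat (complex_of_real \<beta>) Delta + smat (complex_of_real \<gamma>) (mat 1))"
    using separating_psd[OF sep hB] .
  have "\<gamma> \<noteq> 0"
  proof
    assume g: "\<gamma> = 0"
    then have b: "\<beta> = 0" using separating_gamma_nonneg(2)[OF sep t1] by blast
    have "inner B (mat 1) = 0"
      using orth idtensor_mem_dual_subspace[OF hermitian_mat1] unfolding idtensor_mat1 by blast
    then have "B = 0"
      using psd_eq_0_if_trace_0 pM unfolding g b inner_commute[of B] inner_mat1
      by (simp add: smat_zero_left)
    then show False using nz g b by (simp add: zero_prod_def)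
  qed
  then have "0 < \<gamma>" using separating_gamma_nonneg(1)[OF sep t1] by simp
  then show ?thesis
    using primal_value_from_separator[OF ms ptrace1_eq_0_if_orth_dual_subspace[OF hB orth]
        ampl_if_orth_dual_subspace[OF ms hB orth] pM _ separating_offset_nonneg[OF sep]]
    by blast
qed

section \<open>The CP-index as the value of the primal program\<close>

lemma block_psd_1: "block_psd (Suc 0) (\<lambda>i j. M) \<longleftrightarrow> psd M"
proof -
  have "block_psd (Suc 0) (\<lambda>i j. M) \<longleftrightarrow> (\<forall>v::nat \<Rightarrow> complex^'a. Im (quad_form M (v 0)) = 0 \<and> 0 \<le> Re (quad_form M (v 0)))"
    unfolding block_psd_iff quad_form_def by simp
  also have "\<dots> \<longleftrightarrow> (\<forall>w. Im (quad_form M w) = 0 \<and> 0 \<le> Re (quad_form M w))"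
  proof
    assume h: "\<forall>v::nat \<Rightarrow> complex^'a. Im (quad_form M (v 0)) = 0 \<and> 0 \<le> Re (quad_form M (v 0))"
    show "\<forall>w. Im (quad_form M w) = 0 \<and> 0 \<le> Re (quad_form M w)"
    proof
      fix w show "Im (quad_form M w) = 0 \<and> 0 \<le> Re (quad_form M w)" using h[rule_format, of "\<lambda>_. w"] by simp
    qed
  qed blast
  finally show ?thesis unfolding psd_iff_quad_form .
qed

lemma quad_form_smat_mat1_axis: "quad_form (smat c (mat 1)) (axis a 1) = c"
  unfolding quad_form_axis smat_nth by (simp add: mat_def)

lemma psd_smat_mat1D:
  assumes "psd (smat c (mat 1) :: complex^'n::finite^'n)" shows "Im c = 0" "0 \<le> Re c"
  using assms[unfolded psd_iff_quad_form, rule_format, of "axis undefined 1"]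
  unfolding quad_form_smat_mat1_axis by simp_all

lemma smat_mat1_mult_vec: "smat (complex_of_real d) (mat 1) *v x = d *\<^sub>R x"
proof -
  have "(\<Sum>j\<in>UNIV. complex_of_real d * mat 1 $ i $ j * x $ j) = complex_of_real d * x $ i" for i
  proof -
    have "(\<Sum>j\<in>UNIV. complex_of_real d * mat 1 $ i $ j * x $ j) = (\<Sum>j\<in>UNIV. if j = i then complex_of_real d * x $ j else 0)"
      by (intro sum.cong refl) (auto simp: mat_def)
    then show ?thesis by simp
  qed
  moreover have "(d *\<^sub>R x) $ i = complex_of_real d * x $ i" for i
    by (simp only: vector_scaleR_component) (simp only: scaleR_conv_of_real)
  ultimately show ?thesis
    unfolding vec_eq_iff matrix_vector_mult_def vec_lambda_beta smat_nth by simp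
qed

lemma opnorm_smat_mat1:
  assumes "0 \<le> d" shows "opnorm (smat (complex_of_real d) (mat 1) :: complex^'n::finite^'n) = d"
proof -
  have "opnorm (smat (complex_of_real d) (mat 1) :: complex^'n^'n) = onorm (\<lambda>x::complex^'n. d *\<^sub>R x)"
    unfolding opnorm_def smat_mat1_mult_vec ..
  also have "\<dots> = \<bar>d\<bar> * onorm (\<lambda>x::complex^'n. x)" by (rule onorm_scaleR[OF bounded_linear_ident])
  also have "\<dots> = d" using assms onorm_id[where 'a="complex^'n"] by simp
  finally show ?thesis .
qed

lemma CP1_unit_scalar:
  fixes \<phi> :: "complex^'n::finite^'n \<Rightarrow> complex^'n^'n"
  assumes "CP1 \<phi>" "CP (\<lambda>A. \<phi> A - A)"
  obtains d where "1 \<le> d" "\<phi> (mat 1) = smat (complex_of_real d) (mat 1)"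
proof -
  obtain c where c: "\<phi> (mat 1) = smat c (mat 1)"
    using assms(1) unfolding CP1_def by (metis smat_one)
  have "block_psd (Suc 0) (\<lambda>i j. mat 1 :: complex^'n^'n)" using block_psd_1 psd_mat1 by blast
  then have "block_psd (Suc 0) (\<lambda>i j. \<phi> (mat 1) - mat 1)" using assms(2) unfolding CP_def by blast
  moreover have "\<phi> (mat 1) - mat 1 = smat (c - 1) (mat 1)"
    unfolding c by (simp add: vec_eq_iff smat_nth algebra_simps)
  ultimately have "psd (smat (c - 1) (mat 1) :: complex^'n^'n)" unfolding block_psd_1 by simp
  then have "Im c = 0" "1 \<le> Re c" using psd_smat_mat1D by fastforce+
  moreover from this have "c = complex_of_real (Re c)" by (simp add: complex_eq_iff)
  ultimately show ?thesis using that c by metis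
qed

text \<open>\<open>(C\<^sub>\<phi> - \<Delta>)/d\<close> is positive since \<open>C\<^sub>\<phi> - \<Delta>\<close> is the Choi matrix of \<open>\<phi> - id\<close>, and its partial trace is
  \<open>(\<phi>(1) - 1)/d\<close>.\<close>
lemma primal_value_if_CP_index_feasible:
  fixes \<phi> :: "complex^'n::finite^'n \<Rightarrow> complex^'n^'n"
  assumes ms: "matricial_system S" and c1: "CP1 \<phi>" and r: "range \<phi> \<subseteq> S" and cp: "CP (\<lambda>A. \<phi> A - A)"
  shows "1 \<le> opnorm (\<phi> (mat 1))" and "inverse (opnorm (\<phi> (mat 1))) \<in> primal_values S"
proof -
  obtain d where d1: "1 \<le> d" and e: "\<phi> (mat 1) = smat (complex_of_real d) (mat 1)"
    using CP1_unit_scalar[OF c1 cp] .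
  have dpos: "0 < d" using d1 by simp
  have nd: "opnorm (\<phi> (mat 1)) = d" unfolding e using dpos by (simp add: opnorm_smat_mat1)
  then show "1 \<le> opnorm (\<phi> (mat 1))" using d1 by simp
  define X where "X = smat (complex_of_real (1 / d)) (choi \<phi> - Delta)"
  have "psd (choi \<phi> - Delta)" using psd_choi_if_CP[OF cp] unfolding choi_diff_id .
  then have "psd X" unfolding X_def using dpos by (intro psd_smat) auto
  moreover have "ptrace1 X = smat (complex_of_real (1 - 1 / d)) (mat 1)"
  proof -
    have "clin \<phi>" using c1 unfolding CP1_def CP_def by blast
    then have "ptrace1 X = smat (complex_of_real (1 / d)) (smat (complex_of_real d) (mat 1) - mat 1)"
      unfolding X_def ptrace1_smat ptrace1_diff ptrace1_Delta by (simp add: ptrace1_choi e)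
    also have "\<dots> = smat (complex_of_real (1 - 1 / d)) (mat 1)"
      using dpos by (simp add: vec_eq_iff smat_nth algebra_simps)
    finally show ?thesis .
  qed
  moreover have "X + smat (complex_of_real (1 / d)) Delta \<in> ampl S"
  proof -
    have "X + smat (complex_of_real (1 / d)) Delta = smat (complex_of_real (1 / d)) (choi \<phi>)"
      unfolding X_def by (simp add: vec_eq_iff smat_nth algebra_simps)
    moreover have "choi \<phi> \<in> ampl S" unfolding ampl_iff_block block_choi using r by blast
    ultimately show ?thesis using ampl_smat ms unfolding matricial_system_def by metis
  qed
  ultimately show "inverse (opnorm (\<phi> (mat 1))) \<in> primal_values S"
    unfolding nd primal_values_def by (auto simp: divide_inverse)
qed

lemma range_choi_map_subset:
  assumes cs: "csubspace S" and "C \<in> ampl S" shows "range (choi_map C) \<subseteq> S"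
proof
  fix y assume "y \<in> range (choi_map C)"
  then obtain A where y: "y = choi_map C A" by blast
  have sm: "smat (A $ i $ j) (block C i j) \<in> S" for i j
    using assms unfolding ampl_iff_block csubspace_def by blast
  have "(\<Sum>i\<in>UNIV. \<Sum>j\<in>UNIV. smat (A $ i $ j) (block C i j)) \<in> S"
    by (intro csubspace_sum[OF cs] sm) simp_all
  then show "y \<in> S" unfolding y choi_map_eq_sum_blocks .
qed

text \<open>Conversely, a primal point \<open>X\<close> of value \<open>\<lambda> > 0\<close> yields the map with Choi matrix \<open>X/\<lambda> + \<Delta>\<close>.\<close>
lemma CP_index_feasible_if_primal_value:
  fixes S :: "(complex^'n::finite^'n) set"
  assumes ms: "matricial_system S" and lP: "lam \<in> primal_values S" and lp: "0 < lam"
  shows "\<exists>\<phi>. CP1 \<phi> \<and> range \<phi> \<subseteq> S \<and> CP (\<lambda>A. \<phi> A - A) \<and> opnorm (\<phi> (mat 1)) = inverse lam"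
proof -
  obtain X :: "complex^('n\<times>'n)^('n\<times>'n)" where p1: "ptrace1 X = smat (complex_of_real (1 - lam)) (mat 1)"
    and p2: "X + smat (complex_of_real lam) Delta \<in> ampl S" and p3: "psd X"
    using lP unfolding primal_values_def by blast
  define C where "C = smat (complex_of_real (1 / lam)) (X + smat (complex_of_real lam) Delta)"
  define \<phi> where "\<phi> = choi_map C"
  have Ceq: "C = smat (complex_of_real (1 / lam)) X + Delta"
    unfolding C_def using lp by (simp add: vec_eq_iff smat_nth algebra_simps)
  have pX': "psd (smat (complex_of_real (1 / lam)) X)" using lp by (intro psd_smat[OF p3]) auto
  have cp: "CP \<phi>" unfolding \<phi>_def Ceq by (intro CP_choi_map psd_add pX' psd_Delta)
  have "(\<lambda>A. \<phi> A - A) = choi_map (smat (complex_of_real (1 / lam)) X)"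
    unfolding \<phi>_def Ceq choi_map_add choi_map_Delta by (simp add: fun_eq_iff)
  then have cp': "CP (\<lambda>A. \<phi> A - A)" using CP_choi_map[OF pX'] by simp
  have rng: "range \<phi> \<subseteq> S"
    unfolding \<phi>_def C_def using ms p2 ampl_smat range_choi_map_subset
    unfolding matricial_system_def by metis
  have one: "\<phi> (mat 1) = smat (complex_of_real (1 / lam)) (mat 1)"
  proof -
    have "\<phi> (mat 1) = smat (complex_of_real (1 / lam))
        (smat (complex_of_real (1 - lam)) (mat 1) + smat (complex_of_real lam) (mat 1))"
      unfolding \<phi>_def choi_map_mat1 C_def ptrace1_smat ptrace1_add p1 ptrace1_Delta ..
    also have "\<dots> = smat (complex_of_real (1 / lam)) (mat 1)"
      by (simp add: vec_eq_iff smat_nth algebra_simps)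
    finally show ?thesis .
  qed
  have "CP1 \<phi>"
    unfolding CP1_def
  proof (intro conjI allI)
    fix c
    have "\<phi> (smat c (mat 1)) = smat c (\<phi> (mat 1))" using cp unfolding CP_def clin_def by blast
    then show "\<exists>d. \<phi> (smat c (mat 1)) = smat d (mat 1)" unfolding one smat_smat by blast
  qed (rule cp)
  moreover have "opnorm (\<phi> (mat 1)) = inverse lam"
    unfolding one using lp opnorm_smat_mat1[of "1 / lam"] by (simp add: divide_inverse)
  ultimately show ?thesis using rng cp' by blast
qed

section \<open>Optimal values\<close>

lemma inverse_Inf_eq_Sup:
  fixes D P :: "real set"
  assumes D: "\<And>d. d \<in> D \<Longrightarrow> 0 < d \<and> inverse d \<in> P"
    and P: "\<And>p. p \<in> P \<Longrightarrow> 0 < p \<Longrightarrow> inverse p \<in> D"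
    and bdd: "bdd_above P" and p0: "p0 \<in> P" "0 < p0"
  shows "inverse (Inf D) = Sup P"
proof -
  have Dne: "D \<noteq> {}" using P p0 by blast
  have sup_pos: "0 < Sup P" using cSup_upper[OF p0(1) bdd] p0(2) by linarith
  have "inverse (Sup P) \<le> d" if "d \<in> D" for d
    using le_imp_inverse_le[OF cSup_upper[OF conjunct2[OF D[OF that]] bdd]] D[OF that] by simp
  then have le_inf: "inverse (Sup P) \<le> Inf D" by (rule cInf_greatest[OF Dne])
  then have inf_pos: "0 < Inf D" using sup_pos by (meson inverse_positive_iff_positive less_le_trans)
  have "p \<le> inverse (Inf D)" if "p \<in> P" for p
  proof (cases "0 < p")
    case True
    have "Inf D \<le> inverse p"
      using cInf_lower[OF P[OF that True]] D unfolding bdd_below_def by (meson less_le)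
    then show ?thesis using le_imp_inverse_le[OF _ inf_pos] True by fastforce
  next
    case False
    then show ?thesis using inf_pos by (meson inverse_positive_iff_positive less_le not_less order.trans)
  qed
  then have "Sup P \<le> inverse (Inf D)" by (rule cSup_least[OF ex_in_conv[THEN iffD1, OF exI, OF p0(1)]])
  moreover have "inverse (Inf D) \<le> Sup P"
    using le_imp_inverse_le[OF le_inf] sup_pos by simp
  ultimately show ?thesis by simp
qed

lemma Sup_eq_Inf_if_no_duality_gap:
  fixes P D :: "real set"
  assumes "P \<noteq> {}" "D \<noteq> {}"
    and weak: "\<And>p d. p \<in> P \<Longrightarrow> d \<in> D \<Longrightarrow> p \<le> d"
    and strong: "\<And>t. \<forall>d\<in>D. t < d \<Longrightarrow> \<exists>p\<in>P. t \<le> p"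
  shows "Sup P = Inf D"
proof -
  have bP: "bdd_above P" and bD: "bdd_below D"
    using assms(1,2) weak unfolding bdd_above_def bdd_below_def by blast+
  have le: "Sup P \<le> Inf D" using assms(1,2) weak by (meson cInf_greatest cSup_least)
  have "\<not> Sup P < Inf D"
  proof
    assume lt: "Sup P < Inf D"
    have "\<forall>d\<in>D. (Sup P + Inf D) / 2 < d" using cInf_lower[OF _ bD] lt by fastforce
    then obtain p where "p \<in> P" "(Sup P + Inf D) / 2 \<le> p" using strong by blast
    then show False using cSup_upper[OF _ bP] lt by fastforce
  qed
  then show ?thesis using le by simp
qed

lemma Sup_primal_values_eq_Inf_dual_values:
  "matricial_system S \<Longrightarrow> Sup (primal_values S) = Inf (dual_values S)"
  using inverse_card_sq_mem_primal_values one_mem_dual_values weak_duality strong_duality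
  by (intro Sup_eq_Inf_if_no_duality_gap) blast+

lemma inverse_Ind_CP_eq_Sup_primal_values:
  fixes S :: "(complex^'n::finite^'n) set"
  assumes ms: "matricial_system S"
  shows "inverse (Ind_CP S) = Sup (primal_values S)"
  unfolding Ind_CP_def
proof (rule inverse_Inf_eq_Sup)
  show "bdd_above (primal_values S)"
    using weak_duality[OF ms _ one_mem_dual_values] unfolding bdd_above_def by blast
  show "1 / (real CARD('n))\<^sup>2 \<in> primal_values S" "0 < 1 / (real CARD('n))\<^sup>2"
    using inverse_card_sq_mem_primal_values[OF ms] by simp_all
next
  fix d assume "d \<in> {opnorm (\<phi> (mat 1)) | \<phi>. CP1 \<phi> \<and> range \<phi> \<subseteq> S \<and> CP (\<lambda>A. \<phi> A - A)}"
  then obtain \<phi> where d: "d = opnorm (\<phi> (mat 1))"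
    and \<phi>: "CP1 \<phi>" "range \<phi> \<subseteq> S" "CP (\<lambda>A. \<phi> A - A)" by blast
  show "0 < d \<and> inverse d \<in> primal_values S"
    using primal_value_if_CP_index_feasible[OF ms \<phi>] unfolding d by simp
next
  fix p assume "p \<in> primal_values S" "0 < p"
  then obtain \<phi> where "CP1 \<phi> \<and> range \<phi> \<subseteq> S \<and> CP (\<lambda>A. \<phi> A - A) \<and> opnorm (\<phi> (mat 1)) = inverse p"
    using CP_index_feasible_if_primal_value[OF ms] by blast
  then show "inverse p \<in> {opnorm (\<phi> (mat 1)) | \<phi>. CP1 \<phi> \<and> range \<phi> \<subseteq> S \<and> CP (\<lambda>A. \<phi> A - A)}"
    by force
qed

theorem proposition4p2:
  fixes S :: "(complex^'n^'n) set"
  assumes "matricial_system S"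
  shows "inverse (Ind_CP S) =
           Inf {Re (mtr X) | X Y. hermitian X \<and> hermitian Y \<and> Y \<in> ampl (perp S) \<and>
                  mtr ((idtensor X + Y) ** Delta) = 1 \<and> psd (idtensor X + Y)}
       \<and> Sup {lam::real. \<exists>X::complex^('n\<times>'n)^('n\<times>'n).
                  ptrace1 X = smat (complex_of_real (1 - lam)) (mat 1) \<and>
                  X + smat (complex_of_real lam) Delta \<in> ampl S \<and> psd X}
         = Inf {Re (mtr X) | X Y. hermitian X \<and> hermitian Y \<and> Y \<in> ampl (perp S) \<and>
                  mtr ((idtensor X + Y) ** Delta) = 1 \<and> psd (idtensor X + Y)}"
  using inverse_Ind_CP_eq_Sup_primal_values[OF assms] Sup_primal_values_eq_Inf_dual_values[OF assms]
  unfolding primal_values_def dual_values_def by simp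

end
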